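(* Assume the standing setting and hypotheses (H1), (H2), (H3) below, let $p\in[1,+\infty]$, and equip $X$ and $Y$ with $\|\cdot\|_p$. The following are equivalent: (i) the system given by (P) with state space $X$ is ISS w.r.t. inputs in $\mathcal{U}$, i.e. there are $\beta\in\mathcal{KL}$, $\gamma\in\mathcal{K}$ with $\|\phi(t,x,u)\|_p\le\beta(\|x\|_p,t)+\gamma(\|u\|_{\mathcal{U}})$ for all $t\ge0$, $x\in X$, $u\in\mathcal{U}(x)$; (ii) the same estimate holds for all $t\ge0$, $x\in X$ and all $u\in\mathcal{U}(x)\cap\mathcal{U}_c$ (inputs constant in time and space); (iii) the system (Q) with state space $Y$ is ISS w.r.t. inputs in $\mathcal{V}$, i.e. there are $\beta\in\mathcal{KL}$, $\gamma\in\mathcal{K}$ with $\|\phi_Y(t,y,v)\|_p\le\beta(\|y\|_p,t)+\gamma(\|v\|_{\mathcal{V}})$ for all $t\ge0$, $y\in Y$, $v\in\mathcal{V}$.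
   Context: Standing setting: $G\subset\mathbb{R}^n$ open and bounded, $\mu(G)$ its Lebesgue measure; $CL=C^0(\mathbb{R}_+\times\overline G)\cap C^{1,2}((0,\infty)\times G)$; $x[t]:=x(t,\cdot)$. $L$: $(Lx)(t,z)=\partial_tx-\sum_{i,j=1}^na_{ij}(z)\partial_{z_i}\partial_{z_j}x-f(z,x,\nabla x)$, $a_{ij}\in C^0(\overline G)$, $f\in C^0(\overline G\times\mathbb{R}\times\mathbb{R}^n)$, uniformly parabolic ($\sum a_{ij}(z)\xi_i\xi_j\ge K|\xi|^2$, $K>0$). Problem (P): $Lx=0$ on $(0,\infty)\times G$, $x(0,\cdot)=x_0$ on $G$, $x=u$ on $\mathbb{R}_+\times\partial G$. $\mathcal{U}=\{u\in C^0(\mathbb{R}_+;C^0(\partial G)):u\text{ bounded}\}$, $\|u\|_{\mathcal{U}}=\sup_{t\ge0,z\in\partial G}|u(t,z)|$, ordered pointwise; $\mathcal{U}_c=\{u\in\mathcal{U}:\exists k\in\mathbb{R},\ u\equiv k\}$. $\phi(t,x_0,u)=x[t]$ denotes the unique classical solution of (P). (H1) There is a linear space $X\subseteq C^0(\overline G)$ containing all constant functions, and for each $x_0\in X$ a nonempty set $\mathcal{U}(x_0)\subseteq\{v\in\mathcal{U}:v(0,z)=x_0(z)\ \forall z\in\partial G\}$ containing every $v\in\mathcal{U}$ with $v(t,z)=x_0(z)$ for all $z\in\partial G$, $t\ge0$, such that for every $x_0\in X$, $u\in\mathcal{U}(x_0)$ problem (P) has a solution $x\in CL$ with $x[t]\in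 X$ for all $t\ge0$. (H2) For every bounded $W\subset\mathbb{R}$ there is $k>0$ with $f(z,w_1,\xi)-f(z,w_2,\xi)<k(w_1-w_2)$ for all $w_1>w_2$ in $W$, $z\in G$, $\xi\in\mathbb{R}^n$; and $f$ is continuously differentiable w.r.t. $(w,\xi)$. (H3) For every $\delta>0$, $a\in\mathbb{R}$, $x\in X$ there is a continuous $k:\overline G\to[0,1]$ with $k=1$ on $\partial G$, $k(z)=0$ whenever $z\in G$ and $\inf_{s\in\partial G}|z-s|\ge\delta$, and $(1-k)x+ak\in X$. System (Q): $\partial_ty-\sum a_{ij}(z)\partial_{z_i}\partial_{z_j}y-f(z,y+v,\nabla y)=0$ on $(0,\infty)\times G$, $y=0$ on $\mathbb{R}_+\times\partial G$, with state space $Y=\{y\in X:y=0\text{ on }\partial G\}$ and inputs $\mathcal{V}=\{v\in C^0(\mathbb{R}_+\times\overline G):v\equiv k\text{ for some }k\in\mathbb{R}\}$, $\|v\|_{\mathcal{V}}=|k|$ (sup norm). Its solution is $\phi_Y(t,y,v)=\phi(t,y+v,v|_{\partial G})-v$ (well defined since $v|_{\partial G}\in\mathcal{U}(y+v)$ by (H1)). $\mathcal{K},\mathcal{KL}$ are the standard comparison function classes. *)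

theory Defs
  imports "HOL-Analysis.Analysis"
begin

type_synonym 'n space = "real ^ 'n"

text \<open>Canonical representative of an element of C0(closure G): values outside closure G set to 0.\<close>
definition restr :: "('n::finite) space set \<Rightarrow> ('n space \<Rightarrow> real) \<Rightarrow> ('n space \<Rightarrow> real)" where
  "restr G g = (\<lambda>z. if z \<in> closure G then g z else 0)"

definition C0cl :: "('n::finite) space set \<Rightarrow> ('n space \<Rightarrow> real) set" where
  "C0cl G = {g. continuous_on (closure G) g \<and> (\<forall>z. z \<notin> closure G \<longrightarrow> g z = 0)}"

definition pdt :: "(real \<Rightarrow> ('n::finite) space \<Rightarrow> real) \<Rightarrow> real \<Rightarrow> 'n space \<Rightarrow> real" where
  "pdt x t z = deriv (\<lambda>s. x s z) t"

definition pdz :: "'n::finite \<Rightarrow> ('n space \<Rightarrow> real) \<Rightarrow> 'n space \<Rightarrow> real" where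
  "pdz i g z = deriv (\<lambda>h. g (z + h *\<^sub>R axis i 1)) 0"

definition grad :: "('n::finite space \<Rightarrow> real) \<Rightarrow> 'n space \<Rightarrow> 'n space" where
  "grad g z = (\<chi> i. pdz i g z)"

definition CL :: "('n::finite) space set \<Rightarrow> (real \<Rightarrow> 'n space \<Rightarrow> real) set" where
  "CL G = {x.
     continuous_on ({0..} \<times> closure G) (\<lambda>(t,z). x t z) \<and>
     (\<forall>t>0. \<forall>z\<in>G.
        (\<lambda>s. x s z) differentiable (at t) \<and>
        (\<forall>i. (\<lambda>h. x t (z + h *\<^sub>R axis i 1)) differentiable (at 0) \<and>
             (\<forall>j. (\<lambda>h. pdz j (x t) (z + h *\<^sub>R axis i 1)) differentiable (at 0)))) \<and>
     continuous_on ({0<..} \<times> G) (\<lambda>(t,z). pdt x t z) \<and>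
     (\<forall>i. continuous_on ({0<..} \<times> G) (\<lambda>(t,z). pdz i (x t) z)) \<and>
     (\<forall>i j. continuous_on ({0<..} \<times> G) (\<lambda>(t,z). pdz i (pdz j (x t)) z))}"

text \<open>The operator L.  a i j z = a_ij(z), f z w \<xi> = f(z,w,\<xi>).\<close>
definition Lop :: "('n::finite \<Rightarrow> 'n \<Rightarrow> 'n space \<Rightarrow> real) \<Rightarrow> ('n space \<Rightarrow> real \<Rightarrow> 'n space \<Rightarrow> real)
    \<Rightarrow> (real \<Rightarrow> 'n space \<Rightarrow> real) \<Rightarrow> real \<Rightarrow> 'n space \<Rightarrow> real" where
  "Lop a f x t z = pdt x t z - (\<Sum>i\<in>UNIV. \<Sum>j\<in>UNIV. a i j z * pdz i (pdz j (x t)) z)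
                   - f z (x t z) (grad (x t) z)"

definition is_sol where
  "is_sol G a f x0 u x \<longleftrightarrow> x \<in> CL G \<and>
     (\<forall>t>0. \<forall>z\<in>G. Lop a f x t z = 0) \<and>
     (\<forall>z\<in>G. x 0 z = x0 z) \<and>
     (\<forall>t\<ge>0. \<forall>z\<in>frontier G. x t z = u t z)"

definition phi where
  "phi G a f t x0 u = (THE w. \<exists>x. is_sol G a f x0 u x \<and> w = restr G (x t))"

text \<open>Standing convention: phi denotes THE unique classical solution of (P).\<close>
definition sol_unique where
  "sol_unique G a f X Uad \<longleftrightarrow> (\<forall>x0\<in>X. \<forall>u\<in>Uad x0. \<forall>x x'.
     is_sol G a f x0 u x \<and> is_sol G a f x0 u x' \<longrightarrow>
     (\<forall>t\<ge>0. \<forall>z\<in>closure G. x t z = x' t z))"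

definition Uset :: "('n::finite) space set \<Rightarrow> (real \<Rightarrow> 'n space \<Rightarrow> real) set" where
  "Uset G = {u.
     (\<forall>t\<ge>0. continuous_on (frontier G) (u t)) \<and>
     (\<forall>t\<ge>0. \<forall>e>0. \<exists>d>0. \<forall>s\<ge>0. \<bar>s - t\<bar> < d \<longrightarrow> (\<forall>z\<in>frontier G. \<bar>u s z - u t z\<bar> \<le> e)) \<and>
     (\<exists>M. \<forall>t\<ge>0. \<forall>z\<in>frontier G. \<bar>u t z\<bar> \<le> M)}"

definition unorm :: "('n::finite) space set \<Rightarrow> (real \<Rightarrow> 'n space \<Rightarrow> real) \<Rightarrow> real" where
  "unorm G u = Sup (insert 0 {\<bar>u t z\<bar> | t z. t \<ge> 0 \<and> z \<in> frontier G})"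

definition Uc :: "('n::finite) space set \<Rightarrow> (real \<Rightarrow> 'n space \<Rightarrow> real) set" where
  "Uc G = {u \<in> Uset G. \<exists>k. \<forall>t\<ge>0. \<forall>z\<in>frontier G. u t z = k}"

definition lpnorm :: "('n::finite) space set \<Rightarrow> ereal \<Rightarrow> ('n space \<Rightarrow> real) \<Rightarrow> real" where
  "lpnorm G p g = (if p = \<infinity> then Sup (insert 0 ((\<lambda>z. \<bar>g z\<bar>) ` G))
                   else (integral G (\<lambda>z. \<bar>g z\<bar> powr real_of_ereal p)) powr (1 / real_of_ereal p))"

definition class_K :: "(real \<Rightarrow> real) \<Rightarrow> bool" where
  "class_K \<gamma> \<longleftrightarrow> continuous_on {0..} \<gamma> \<and> \<gamma> 0 = 0 \<and> strict_mono_on {0..} \<gamma>"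

definition class_KL :: "(real \<Rightarrow> real \<Rightarrow> real) \<Rightarrow> bool" where
  "class_KL \<beta> \<longleftrightarrow> continuous_on ({0..} \<times> {0..}) (\<lambda>(r,t). \<beta> r t) \<and>
     (\<forall>t\<ge>0. class_K (\<lambda>r. \<beta> r t)) \<and>
     (\<forall>r\<ge>0. antimono_on {0..} (\<beta> r) \<and> ((\<beta> r) \<longlongrightarrow> 0) at_top)"

definition standing where
  "standing G a f \<longleftrightarrow> open G \<and> bounded G \<and>
     (\<forall>i j. continuous_on (closure G) (a i j)) \<and>
     continuous_on (closure G \<times> UNIV \<times> UNIV) (\<lambda>(z,w,\<xi>). f z w \<xi>) \<and>
     (\<exists>K>0. \<forall>z\<in>closure G. \<forall>\<xi>::real^_. (\<Sum>i\<in>UNIV. \<Sum>j\<in>UNIV. a i j z * \<xi>$i * \<xi>$j) \<ge> K * (norm \<xi>)\<^sup>2)"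

definition H1 where
  "H1 G a f X Uad \<longleftrightarrow>
     X \<subseteq> C0cl G \<and>
     (\<forall>x\<in>X. \<forall>y\<in>X. (\<lambda>z. x z + y z) \<in> X) \<and>
     (\<forall>c. \<forall>x\<in>X. (\<lambda>z. c * x z) \<in> X) \<and>
     (\<forall>c. restr G (\<lambda>_. c) \<in> X) \<and>
     (\<forall>x0\<in>X. Uad x0 \<noteq> {} \<and>
        Uad x0 \<subseteq> {v \<in> Uset G. \<forall>z\<in>frontier G. v 0 z = x0 z} \<and>
        (\<forall>v\<in>Uset G. (\<forall>t\<ge>0. \<forall>z\<in>frontier G. v t z = x0 z) \<longrightarrow> v \<in> Uad x0) \<and>
        (\<forall>u\<in>Uad x0. \<exists>x. is_sol G a f x0 u x \<and> (\<forall>t\<ge>0. x t \<in> X)))"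

definition H2 :: "('n::finite) space set \<Rightarrow> ('n space \<Rightarrow> real \<Rightarrow> 'n space \<Rightarrow> real) \<Rightarrow> bool" where
  "H2 G f \<longleftrightarrow>
     (\<forall>W::real set. bounded W \<longrightarrow> (\<exists>k>0. \<forall>w1\<in>W. \<forall>w2\<in>W. w1 > w2 \<longrightarrow>
        (\<forall>z\<in>G. \<forall>\<xi>. f z w1 \<xi> - f z w2 \<xi> < k * (w1 - w2)))) \<and>
     (\<exists>fw f\<xi>. (\<forall>z\<in>closure G. \<forall>w \<xi>.
          ((\<lambda>p. f z (fst p) (snd p)) has_derivative
             (\<lambda>(dw, d\<xi>). fw z w \<xi> * dw + f\<xi> z w \<xi> \<bullet> d\<xi>)) (at (w, \<xi>))) \<and>
        continuous_on (closure G \<times> UNIV \<times> UNIV) (\<lambda>(z,w,\<xi>). fw z w \<xi>) \<and>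
        continuous_on (closure G \<times> UNIV \<times> UNIV) (\<lambda>(z,w,\<xi>). f\<xi> z w \<xi>))"

definition H3 :: "('n::finite) space set \<Rightarrow> ('n space \<Rightarrow> real) set \<Rightarrow> bool" where
  "H3 G X \<longleftrightarrow> (\<forall>\<delta>>0. \<forall>c::real. \<forall>x\<in>X. \<exists>k.
     continuous_on (closure G) k \<and> (\<forall>z\<in>closure G. 0 \<le> k z \<and> k z \<le> 1) \<and>
     (\<forall>z\<in>frontier G. k z = 1) \<and>
     (\<forall>z\<in>G. infdist z (frontier G) \<ge> \<delta> \<longrightarrow> k z = 0) \<and>
     restr G (\<lambda>z. (1 - k z) * x z + c * k z) \<in> X)"

text \<open>System (Q): state space Y, constant inputs v \<equiv> k (identified with k, norm |k|).\<close>
definition Yset :: "('n::finite) space set \<Rightarrow> ('n space \<Rightarrow> real) set \<Rightarrow> ('n space \<Rightarrow> real) set" where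
  "Yset G X = {y \<in> X. \<forall>z\<in>frontier G. y z = 0}"

definition phiY where
  "phiY G a f t y k = restr G (\<lambda>z. phi G a f t (restr G (\<lambda>z'. y z' + k)) (\<lambda>s z'. k) z - k)"

definition ISS_P where
  "ISS_P G a f X Uad p \<longleftrightarrow> (\<exists>\<beta> \<gamma>. class_KL \<beta> \<and> class_K \<gamma> \<and>
     (\<forall>t\<ge>0. \<forall>x\<in>X. \<forall>u\<in>Uad x.
        lpnorm G p (phi G a f t x u) \<le> \<beta> (lpnorm G p x) t + \<gamma> (unorm G u)))"

definition ISS_P_const where
  "ISS_P_const G a f X Uad p \<longleftrightarrow> (\<exists>\<beta> \<gamma>. class_KL \<beta> \<and> class_K \<gamma> \<and>
     (\<forall>t\<ge>0. \<forall>x\<in>X. \<forall>u\<in>Uad x \<inter> Uc G.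
        lpnorm G p (phi G a f t x u) \<le> \<beta> (lpnorm G p x) t + \<gamma> (unorm G u)))"

definition ISS_Q where
  "ISS_Q G a f X p \<longleftrightarrow> (\<exists>\<beta> \<gamma>. class_KL \<beta> \<and> class_K \<gamma> \<and>
     (\<forall>t\<ge>0. \<forall>y\<in>Yset G X. \<forall>k::real.
        lpnorm G p (phiY G a f t y k) \<le> \<beta> (lpnorm G p y) t + \<gamma> \<bar>k\<bar>))"

end

theory Submission
  imports Defs
begin

text \<open>(i) trivially implies (ii), and (ii) implies (iii) because (Q) is (P) run from the shifted
  state \<open>y + k\<close> with the constant input \<open>k\<close>.  For (iii) implies (i) the key tool is the weak
  parabolic comparison principle, which follows from the classical maximum principle argument
  (ellipticity, symmetry of second derivatives, one-sided Lipschitz bound on \<open>f\<close>).  Given an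
  input \<open>u\<close> and any \<open>c > \<parallel>u\<parallel>\<close>, (H3) modifies the initial state \<open>x\<close> near the boundary into
  states taking the boundary values \<open>\<plusminus>c\<close> and lying above resp. below \<open>x\<close>; by comparison the
  solution for \<open>u\<close> is trapped between the solutions with constant inputs \<open>\<plusminus>c\<close>, which are
  trajectories of (Q), and the ISS estimate of (Q) transfers to (P).\<close>

section \<open>Calculus in several variables\<close>

lemma MVT_between:
  fixes f f' :: "real \<Rightarrow> real"
  assumes "\<And>x. min a b \<le> x \<Longrightarrow> x \<le> max a b \<Longrightarrow> (f has_real_derivative f' x) (at x)"
  shows "\<exists>c. min a b \<le> c \<and> c \<le> max a b \<and> f b - f a = (b - a) * f' c"
proof (cases a b rule: linorder_cases)
  case less
  then obtain c where "a < c" "c < b" "f b - f a = (b - a) * f' c"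
    using MVT2[OF less, of f f'] assms by force
  then show ?thesis using less by (intro exI[of _ c]) auto
next
  case equal then show ?thesis by (intro exI[of _ a]) auto
next
  case greater
  then obtain c where "b < c" "c < a" "f a - f b = (a - b) * f' c"
    using MVT2[OF greater, of f f'] assms by force
  then show ?thesis using greater by (intro exI[of _ c]) (auto simp: algebra_simps)
qed

lemma DERIV_line_shift:
  fixes F :: "real^'n \<Rightarrow> real"
  assumes "((\<lambda>h. F (w + h *\<^sub>R v)) has_real_derivative D) (at 0)" "w = b + s0 *\<^sub>R v"
  shows "((\<lambda>s. F (b + s *\<^sub>R v)) has_real_derivative D) (at s0)"
proof -
  have "(\<lambda>h. F (w + h *\<^sub>R v)) = (\<lambda>h. (\<lambda>s. F (b + s *\<^sub>R v)) (h + s0))"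
    using assms(2) by (intro ext) (simp add: scaleR_add_left add.assoc add.commute[of "s0 *\<^sub>R v"])
  then show ?thesis using assms(1) DERIV_shift[of "\<lambda>s. F (b + s *\<^sub>R v)" D 0 s0] by simp
qed

lemma norm_le_componentwise:
  fixes x y :: "real^'n"
  assumes "\<And>i. \<bar>x$i\<bar> \<le> \<bar>y$i\<bar>"
  shows "norm x \<le> norm y"
  unfolding norm_vec_def using assms by (intro L2_set_mono) auto

text \<open>Moving from \<open>z\<close> towards \<open>z + u\<close> one coordinate at a time, each step is a one-variable
  mean value step whose slope is within \<open>\<epsilon>\<close> of the partial derivative at \<open>z\<close>.\<close>

lemma partials_increment_estimate:
  fixes q :: "real^'n \<Rightarrow> real" and p :: "'n \<Rightarrow> real^'n \<Rightarrow> real"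
  assumes near: "\<And>v i. (\<And>i. \<bar>v$i\<bar> \<le> \<bar>u$i\<bar>) \<Longrightarrow> z + v \<in> G \<and> dist (p i (z + v)) (p i z) < \<epsilon>"
    and d: "\<And>w i. w \<in> G \<Longrightarrow> ((\<lambda>h. q (w + h *\<^sub>R axis i 1)) has_real_derivative p i w) (at 0)"
  shows "\<bar>q (z + u) - q z - (\<Sum>i\<in>UNIV. u$i * p i z)\<bar> \<le> \<epsilon> * (\<Sum>i\<in>UNIV. \<bar>u$i\<bar>)"
proof -
  define ys where "ys S = (\<chi> i. if i \<in> S then u$i else 0)" for S
  have "\<bar>q (z + ys S) - q z - (\<Sum>i\<in>S. u$i * p i z)\<bar> \<le> \<epsilon> * (\<Sum>i\<in>S. \<bar>u$i\<bar>)" if "finite S" for S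
    using that
  proof (induction S rule: finite_induct)
    case empty
    have "ys {} = 0" by (simp add: ys_def vec_eq_iff)
    then show ?case by simp
  next
    case (insert j S)
    define w0 where "w0 = z + ys S"
    define \<phi> where "\<phi> s = q (w0 + s *\<^sub>R axis j 1)" for s
    have pts: "w0 + s *\<^sub>R axis j 1 = z + (ys S + s *\<^sub>R axis j 1)
        \<and> (\<forall>i. \<bar>(ys S + s *\<^sub>R axis j 1)$i\<bar> \<le> \<bar>u$i\<bar>)" if "\<bar>s\<bar> \<le> \<bar>u$j\<bar>" for s
      using that insert by (auto simp: w0_def ys_def axis_def)
    have inG: "w0 + s *\<^sub>R axis j 1 \<in> G \<and> dist (p j (w0 + s *\<^sub>R axis j 1)) (p j z) < \<epsilon>"
      if "\<bar>s\<bar> \<le> \<bar>u$j\<bar>" for s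
    proof -
      have "\<And>i. \<bar>(ys S + s *\<^sub>R axis j 1)$i\<bar> \<le> \<bar>u$i\<bar>" using pts[OF that] by blast
      from near[OF this] show ?thesis using pts[OF that] by (simp add: add.assoc)
    qed
    have der: "(\<phi> has_real_derivative p j (w0 + s *\<^sub>R axis j 1)) (at s)"
      if "\<bar>s\<bar> \<le> \<bar>u$j\<bar>" for s
      unfolding \<phi>_def by (rule DERIV_line_shift[OF d[OF conjunct1[OF inG[OF that]]] refl])
    obtain c where c: "min 0 (u$j) \<le> c" "c \<le> max 0 (u$j)"
      "\<phi> (u$j) - \<phi> 0 = (u$j - 0) * p j (w0 + c *\<^sub>R axis j 1)"
      using MVT_between[of 0 "u$j" \<phi> "\<lambda>s. p j (w0 + s *\<^sub>R axis j 1)"] der by force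
    have "\<bar>c\<bar> \<le> \<bar>u$j\<bar>" using c by auto
    then have "dist (p j (w0 + c *\<^sub>R axis j 1)) (p j z) < \<epsilon>"
      using inG by blast
    then have step: "\<bar>\<phi> (u$j) - \<phi> 0 - u$j * p j z\<bar> \<le> \<epsilon> * \<bar>u$j\<bar>"
      using c(3) by (simp add: dist_real_def right_diff_distrib[symmetric] abs_mult)
        (metis abs_ge_zero less_imp_le mult.commute mult_right_mono)
    have "ys (insert j S) = ys S + u$j *\<^sub>R axis j 1"
      using insert by (auto simp: ys_def vec_eq_iff axis_def)
    then have "\<phi> (u$j) = q (z + ys (insert j S))" by (simp add: \<phi>_def w0_def add.assoc)
    moreover have "\<phi> 0 = q (z + ys S)" by (simp add: \<phi>_def w0_def)
    ultimately show ?case using insert step by (simp add: distrib_left)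
  qed
  moreover have "ys UNIV = u" by (simp add: ys_def vec_eq_iff)
  ultimately show ?thesis using finite[of UNIV] by force
qed

lemma has_derivative_of_continuous_partials:
  fixes q :: "real^'n \<Rightarrow> real" and p :: "'n \<Rightarrow> real^'n \<Rightarrow> real"
  assumes G: "open G" "z \<in> G"
    and d: "\<And>w i. w \<in> G \<Longrightarrow> ((\<lambda>h. q (w + h *\<^sub>R axis i 1)) has_real_derivative p i w) (at 0)"
    and c: "\<And>i. continuous_on G (p i)"
  shows "(q has_derivative (\<lambda>v. \<Sum>i\<in>UNIV. v$i * p i z)) (at z)"
  unfolding has_derivative_at_alt
proof (intro conjI allI impI)
  show "bounded_linear (\<lambda>v. \<Sum>i\<in>UNIV. v$i * p i z)"
    by (intro bounded_linear_sum bounded_linear_mult_const bounded_linear_vec_nth)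
  fix e :: real assume "e > 0"
  obtain r where r: "r > 0" "ball z r \<subseteq> G" using G open_contains_ball by blast
  define N where "N = real CARD('n)"
  have N: "N > 0" unfolding N_def by simp
  define \<epsilon> where "\<epsilon> = e / N"
  have eps: "\<epsilon> > 0" using \<open>e>0\<close> N by (simp add: \<epsilon>_def)
  have "\<forall>i. \<exists>\<delta>>0. \<forall>w\<in>G. dist w z < \<delta> \<longrightarrow> dist (p i w) (p i z) < \<epsilon>"
    using c G eps unfolding continuous_on_iff by blast
  then obtain \<delta> where \<delta>: "\<And>i. \<delta> i > 0" "\<And>i w. w\<in>G \<Longrightarrow> dist w z < \<delta> i \<Longrightarrow> dist (p i w) (p i z) < \<epsilon>"
    by metis
  define dd where "dd = min r (Min (range \<delta>))"
  have dd: "dd > 0" unfolding dd_def using r \<delta> by simp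
  have ddl: "dd \<le> \<delta> i" for i unfolding dd_def by (simp add: min.coboundedI2)
  show "\<exists>d>0. \<forall>y. norm (y - z) < d \<longrightarrow> norm (q y - q z - (\<Sum>i\<in>UNIV. (y - z)$i * p i z)) \<le> e * norm (y - z)"
  proof (intro exI[of _ dd] conjI allI impI dd)
    fix y assume ny: "norm (y - z) < dd"
    define u where "u = y - z"
    have "z + v \<in> G \<and> dist (p i (z + v)) (p i z) < \<epsilon>" if "\<And>i. \<bar>v$i\<bar> \<le> \<bar>u$i\<bar>" for v i
    proof -
      have "norm v \<le> norm u" using that by (rule norm_le_componentwise)
      then have "dist (z + v) z < dd" using ny by (simp add: dist_norm u_def)
      moreover from this have "z + v \<in> G" using r dd_def by (auto simp: dist_commute intro!: subsetD[OF r(2)])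
      ultimately show ?thesis using \<delta>(2) ddl[of i] by simp
    qed
    then have m: "\<bar>q y - q z - (\<Sum>i\<in>UNIV. u$i * p i z)\<bar> \<le> \<epsilon> * (\<Sum>i\<in>UNIV. \<bar>u$i\<bar>)"
      using partials_increment_estimate[of u z G p \<epsilon> q, OF _ d] by (simp add: u_def)
    have "(\<Sum>i\<in>UNIV. \<bar>u$i\<bar>) \<le> (\<Sum>i\<in>(UNIV::'n set). norm u)"
      by (intro sum_mono) (metis component_le_norm_cart real_norm_def)
    also have "\<dots> = N * norm u" by (simp add: N_def)
    finally have "\<epsilon> * (\<Sum>i\<in>UNIV. \<bar>u$i\<bar>) \<le> \<epsilon> * (N * norm u)" using eps by simp
    also have "\<dots> = e * norm u" using N by (simp add: \<epsilon>_def)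
    finally show "norm (q y - q z - (\<Sum>i\<in>UNIV. (y - z)$i * p i z)) \<le> e * norm (y - z)"
      using m by (simp add: u_def)
  qed
qed

lemma DERIV_along_line_of_partials:
  fixes q :: "real^'n \<Rightarrow> real" and p :: "'n \<Rightarrow> real^'n \<Rightarrow> real"
  assumes "open G" "z + h *\<^sub>R \<xi> \<in> G"
    and "\<And>w i. w \<in> G \<Longrightarrow> ((\<lambda>h. q (w + h *\<^sub>R axis i 1)) has_real_derivative p i w) (at 0)"
    and "\<And>i. continuous_on G (p i)"
  shows "((\<lambda>h. q (z + h *\<^sub>R \<xi>)) has_real_derivative (\<Sum>i\<in>UNIV. \<xi>$i * p i (z + h *\<^sub>R \<xi>))) (at h)"
proof -
  have "(q has_derivative (\<lambda>v. \<Sum>i\<in>UNIV. v$i * p i (z + h *\<^sub>R \<xi>))) (at (z + h *\<^sub>R \<xi>))"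
    using has_derivative_of_continuous_partials assms by blast
  moreover have "((\<lambda>h. z + h *\<^sub>R \<xi>) has_derivative (\<lambda>d. d *\<^sub>R \<xi>)) (at h)"
    by (auto intro!: derivative_eq_intros)
  ultimately have "((\<lambda>h. q (z + h *\<^sub>R \<xi>)) has_derivative
      (\<lambda>d. \<Sum>i\<in>UNIV. (d *\<^sub>R \<xi>)$i * p i (z + h *\<^sub>R \<xi>))) (at h)"
    using has_derivative_compose by fastforce
  moreover have "(\<lambda>d. \<Sum>i\<in>UNIV. (d *\<^sub>R \<xi>)$i * p i (z + h *\<^sub>R \<xi>))
      = (*) (\<Sum>i\<in>UNIV. \<xi>$i * p i (z + h *\<^sub>R \<xi>))"
    by (rule ext) (simp add: sum_distrib_left mult_ac)
  ultimately show ?thesis by (simp add: has_field_derivative_def)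
qed

lemma DERIV2_nonpos_at_local_max:
  fixes \<psi> \<psi>' :: "real \<Rightarrow> real"
  assumes r: "r > 0"
    and d1: "\<And>h. \<bar>h\<bar> < r \<Longrightarrow> (\<psi> has_real_derivative \<psi>' h) (at h)"
    and d2: "(\<psi>' has_real_derivative D) (at 0)"
    and mx: "\<And>h. \<bar>h\<bar> < r \<Longrightarrow> \<psi> h \<le> \<psi> 0"
  shows "D \<le> 0"
proof (rule ccontr)
  assume "\<not> D \<le> 0"
  then have D: "D > 0" by simp
  have z: "\<psi>' 0 = 0"
    using DERIV_local_max[OF d1[of 0] r] mx r by auto
  obtain d where d: "d > 0" "\<And>h. h > 0 \<Longrightarrow> h < d \<Longrightarrow> \<psi>' 0 < \<psi>' (0 + h)"
    using DERIV_pos_inc_right[OF d2 D] by blast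
  define h where "h = min d r / 2"
  have h: "h > 0" "h < d" "h < r" using d r by (auto simp: h_def)
  obtain c where c: "0 < c" "c < h" "\<psi> h - \<psi> 0 = (h - 0) * \<psi>' c"
    using MVT2[of 0 h \<psi> \<psi>'] h d1 by force
  have "\<psi>' c > 0" using d(2)[of c] c h z by simp
  then have "\<psi> h > \<psi> 0" using c h by (metis diff_gt_0_iff_gt mult_pos_pos)
  with mx[of h] h show False by simp
qed

lemma hessian_form_nonpos_at_local_max:
  fixes g :: "real^'n \<Rightarrow> real" and P :: "'n \<Rightarrow> real^'n \<Rightarrow> real"
    and Q :: "'n \<Rightarrow> 'n \<Rightarrow> real^'n \<Rightarrow> real"
  assumes G: "open G" "z0 \<in> G"
    and dP: "\<And>w i. w \<in> G \<Longrightarrow> ((\<lambda>h. g (w + h *\<^sub>R axis i 1)) has_real_derivative P i w) (at 0)"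
    and dQ: "\<And>w i j. w \<in> G \<Longrightarrow> ((\<lambda>h. P j (w + h *\<^sub>R axis i 1)) has_real_derivative Q i j w) (at 0)"
    and cP: "\<And>i. continuous_on G (P i)"
    and cQ: "\<And>i j. continuous_on G (Q i j)"
    and mx: "\<And>z. z \<in> G \<Longrightarrow> g z \<le> g z0"
  shows "(\<Sum>i\<in>UNIV. \<Sum>j\<in>UNIV. \<xi>$i * \<xi>$j * Q i j z0) \<le> 0"
proof -
  obtain r where r: "r > 0" "ball z0 r \<subseteq> G" using G open_contains_ball by blast
  define \<rho> where "\<rho> = r / (norm \<xi> + 1)"
  have n1: "norm \<xi> + 1 > 0" by (simp add: add_nonneg_pos)
  have \<rho>: "\<rho> > 0" using r n1 by (simp add: \<rho>_def)
  have inG: "z0 + h *\<^sub>R \<xi> \<in> G" if "\<bar>h\<bar> < \<rho>" for h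
  proof -
    have "norm (h *\<^sub>R \<xi>) = \<bar>h\<bar> * norm \<xi>" by simp
    also have "\<dots> \<le> \<rho> * norm \<xi>" using that by (simp add: mult_right_mono)
    also have "\<dots> < r" using r n1 by (simp add: \<rho>_def field_simps)
    finally show ?thesis using r(2) by (auto simp: dist_norm)
  qed
  define \<psi>' where "\<psi>' h = (\<Sum>i\<in>UNIV. \<xi>$i * P i (z0 + h *\<^sub>R \<xi>))" for h
  have d1: "((\<lambda>h. g (z0 + h *\<^sub>R \<xi>)) has_real_derivative \<psi>' h) (at h)" if "\<bar>h\<bar> < \<rho>" for h
    unfolding \<psi>'_def by (rule DERIV_along_line_of_partials[OF G(1) inG[OF that] dP cP])
  have d2: "(\<psi>' has_real_derivative (\<Sum>i\<in>UNIV. \<xi>$i * (\<Sum>j\<in>UNIV. \<xi>$j * Q j i z0))) (at 0)"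
    unfolding \<psi>'_def
  proof (intro DERIV_sum DERIV_cmult)
    fix i
    show "((\<lambda>h. P i (z0 + h *\<^sub>R \<xi>)) has_real_derivative (\<Sum>j\<in>UNIV. \<xi>$j * Q j i z0)) (at 0)"
      using DERIV_along_line_of_partials[OF G(1), of z0 0 \<xi> "P i" "\<lambda>j. Q j i"] G dQ cQ by simp
  qed
  have "(\<Sum>i\<in>UNIV. \<xi>$i * (\<Sum>j\<in>UNIV. \<xi>$j * Q j i z0)) \<le> 0"
    using DERIV2_nonpos_at_local_max[OF \<rho> d1 d2] mx inG by simp
  moreover have "(\<Sum>i\<in>UNIV. \<xi>$i * (\<Sum>j\<in>UNIV. \<xi>$j * Q j i z0))
      = (\<Sum>i\<in>UNIV. \<Sum>j\<in>UNIV. \<xi>$i * \<xi>$j * Q i j z0)"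
    by (subst sum.swap) (simp add: sum_distrib_left mult_ac)
  ultimately show ?thesis by simp
qed

lemma dist_two_axis_steps:
  "dist (z0 + s *\<^sub>R axis i 1 + t *\<^sub>R axis j 1) (z0::real^'n) \<le> \<bar>s\<bar> + \<bar>t\<bar>"
proof -
  have "dist (z0 + s *\<^sub>R axis i 1 + t *\<^sub>R axis j 1) z0
      = norm (s *\<^sub>R axis i (1::real) + t *\<^sub>R axis j 1 :: real^'n)"
    unfolding dist_norm by (simp add: add.assoc)
  also have "\<dots> \<le> norm (s *\<^sub>R axis i (1::real) :: real^'n) + norm (t *\<^sub>R axis j (1::real) :: real^'n)"
    by (rule norm_triangle_ineq)
  finally show ?thesis by simp
qed

lemma second_difference_MVT:
  fixes g :: "real^'n \<Rightarrow> real" and P :: "'n \<Rightarrow> real^'n \<Rightarrow> real"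
    and Q :: "'n \<Rightarrow> 'n \<Rightarrow> real^'n \<Rightarrow> real"
  assumes r: "ball z0 r \<subseteq> G"
    and dP: "\<And>w i. w \<in> G \<Longrightarrow> ((\<lambda>h. g (w + h *\<^sub>R axis i 1)) has_real_derivative P i w) (at 0)"
    and dQ: "\<And>w i j. w \<in> G \<Longrightarrow> ((\<lambda>h. P j (w + h *\<^sub>R axis i 1)) has_real_derivative Q i j w) (at 0)"
    and h: "0 < h" "2 * h < r"
  shows "\<exists>\<zeta>. dist \<zeta> z0 < 2 * h \<and>
     g (z0 + h *\<^sub>R axis i 1 + h *\<^sub>R axis j 1) - g (z0 + h *\<^sub>R axis i 1) - g (z0 + h *\<^sub>R axis j 1) + g z0
       = h * h * Q j i \<zeta>"
proof -
  let ?ei = "axis i (1::real) :: real^'n" and ?ej = "axis j (1::real) :: real^'n"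
  have inG: "z0 + t *\<^sub>R ?ej + s *\<^sub>R ?ei \<in> G" if "0 \<le> s" "s \<le> h" "0 \<le> t" "t \<le> h" for s t
  proof -
    have "dist (z0 + t *\<^sub>R ?ej + s *\<^sub>R ?ei) z0 < r"
      using dist_two_axis_steps[of z0 t j s i] that h by linarith
    then show ?thesis using r by (auto simp: dist_commute)
  qed
  have "\<exists>s1>0. s1 < h \<and>
      (g (z0 + h *\<^sub>R ?ej + h *\<^sub>R ?ei) - g (z0 + 0 *\<^sub>R ?ej + h *\<^sub>R ?ei))
      - (g (z0 + h *\<^sub>R ?ej + 0 *\<^sub>R ?ei) - g (z0 + 0 *\<^sub>R ?ej + 0 *\<^sub>R ?ei))
      = (h - 0) * (P i (z0 + h *\<^sub>R ?ej + s1 *\<^sub>R ?ei) - P i (z0 + 0 *\<^sub>R ?ej + s1 *\<^sub>R ?ei))"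
    using h inG inG[of _ 0] by (intro MVT2 DERIV_diff DERIV_line_shift[OF dP refl]) auto
  then obtain s1 where s1: "0 < s1" "s1 < h"
    "g (z0 + h *\<^sub>R ?ej + h *\<^sub>R ?ei) - g (z0 + h *\<^sub>R ?ei) - g (z0 + h *\<^sub>R ?ej) + g z0
      = h * (P i (z0 + h *\<^sub>R ?ej + s1 *\<^sub>R ?ei) - P i (z0 + s1 *\<^sub>R ?ei))"
    by auto
  have "\<exists>t1>0. t1 < h \<and> P i ((z0 + s1 *\<^sub>R ?ei) + h *\<^sub>R ?ej) - P i ((z0 + s1 *\<^sub>R ?ei) + 0 *\<^sub>R ?ej)
      = (h - 0) * Q j i ((z0 + s1 *\<^sub>R ?ei) + t1 *\<^sub>R ?ej)"
    using h s1 inG[of s1] by (intro MVT2 DERIV_line_shift[OF dQ refl]) (auto simp: add_ac)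
  then obtain t1 where t1: "0 < t1" "t1 < h"
    "P i (z0 + h *\<^sub>R ?ej + s1 *\<^sub>R ?ei) - P i (z0 + s1 *\<^sub>R ?ei) = h * Q j i (z0 + s1 *\<^sub>R ?ei + t1 *\<^sub>R ?ej)"
    by (auto simp: add_ac)
  show ?thesis
  proof (intro exI conjI)
    show "dist (z0 + s1 *\<^sub>R ?ei + t1 *\<^sub>R ?ej) z0 < 2 * h"
      using dist_two_axis_steps[of z0 s1 i t1 j] s1 t1 by simp
    show "g (z0 + h *\<^sub>R ?ei + h *\<^sub>R ?ej) - g (z0 + h *\<^sub>R ?ei) - g (z0 + h *\<^sub>R ?ej) + g z0
       = h * h * Q j i (z0 + s1 *\<^sub>R ?ei + t1 *\<^sub>R ?ej)"
      using s1(3) t1(3) by (simp add: add_ac)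
  qed
qed

lemma mixed_partials_symmetric:
  fixes g :: "real^'n \<Rightarrow> real" and P :: "'n \<Rightarrow> real^'n \<Rightarrow> real"
    and Q :: "'n \<Rightarrow> 'n \<Rightarrow> real^'n \<Rightarrow> real"
  assumes G: "open G" "z0 \<in> G"
    and dP: "\<And>w i. w \<in> G \<Longrightarrow> ((\<lambda>h. g (w + h *\<^sub>R axis i 1)) has_real_derivative P i w) (at 0)"
    and dQ: "\<And>w i j. w \<in> G \<Longrightarrow> ((\<lambda>h. P j (w + h *\<^sub>R axis i 1)) has_real_derivative Q i j w) (at 0)"
    and cQ: "\<And>i j. continuous_on G (Q i j)"
  shows "Q i j z0 = Q j i z0"
proof (rule ccontr)
  assume ne: "Q i j z0 \<noteq> Q j i z0"
  define e where "e = \<bar>Q i j z0 - Q j i z0\<bar> / 2"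
  have e: "e > 0" using ne by (simp add: e_def)
  obtain r where r: "r > 0" "ball z0 r \<subseteq> G" using G open_contains_ball by blast
  obtain d1 where d1: "d1 > 0" "\<And>w. w \<in> G \<Longrightarrow> dist w z0 < d1 \<Longrightarrow> dist (Q i j w) (Q i j z0) < e"
    using cQ[of i j] G e unfolding continuous_on_iff by blast
  obtain d2 where d2: "d2 > 0" "\<And>w. w \<in> G \<Longrightarrow> dist w z0 < d2 \<Longrightarrow> dist (Q j i w) (Q j i z0) < e"
    using cQ[of j i] G e unfolding continuous_on_iff by blast
  define h where "h = min r (min d1 d2) / 4"
  have h: "0 < h" "2 * h < r" "2 * h < d1" "2 * h < d2" using r d1 d2 by (auto simp: h_def)
  obtain \<zeta>1 where z1: "dist \<zeta>1 z0 < 2 * h"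
    "g (z0 + h *\<^sub>R axis i 1 + h *\<^sub>R axis j 1) - g (z0 + h *\<^sub>R axis i 1) - g (z0 + h *\<^sub>R axis j 1) + g z0
       = h * h * Q j i \<zeta>1"
    using second_difference_MVT[OF r(2) dP dQ h(1,2), of i j] by blast
  obtain \<zeta>2 where z2: "dist \<zeta>2 z0 < 2 * h"
    "g (z0 + h *\<^sub>R axis j 1 + h *\<^sub>R axis i 1) - g (z0 + h *\<^sub>R axis j 1) - g (z0 + h *\<^sub>R axis i 1) + g z0
       = h * h * Q i j \<zeta>2"
    using second_difference_MVT[OF r(2) dP dQ h(1,2), of j i] by blast
  have pe: "z0 + h *\<^sub>R axis j 1 + h *\<^sub>R axis i 1 = z0 + h *\<^sub>R axis i 1 + h *\<^sub>R axis j (1::real)"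
    by (simp add: algebra_simps)
  have "h * h * Q j i \<zeta>1 = h * h * Q i j \<zeta>2" using z1(2) z2(2)[unfolded pe] by linarith
  then have eq: "Q j i \<zeta>1 = Q i j \<zeta>2" using h by simp
  have inG: "\<zeta>1 \<in> G" "\<zeta>2 \<in> G" using z1 z2 h r by (auto simp: dist_commute)
  have "dist (Q i j \<zeta>2) (Q i j z0) < e" using d1(2)[OF inG(2)] z2 h by simp
  moreover have "dist (Q j i \<zeta>1) (Q j i z0) < e" using d2(2)[OF inG(1)] z1 h by simp
  ultimately have "\<bar>Q i j z0 - Q j i z0\<bar> < 2 * e" using eq by (simp add: dist_real_def)
  then show False by (simp add: e_def)
qed

section \<open>Pairing of semidefinite forms\<close>

definition quad_form :: "('n::finite \<Rightarrow> 'n \<Rightarrow> real) \<Rightarrow> ('n \<Rightarrow> real) \<Rightarrow> real" where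
  "quad_form S x = (\<Sum>i\<in>UNIV. \<Sum>j\<in>UNIV. S i j * x i * x j)"

definition unit_vec :: "'n \<Rightarrow> 'n \<Rightarrow> real" where
  "unit_vec k i = (if i = k then 1 else 0)"

lemma quad_form_zero [simp]: "quad_form S (\<lambda>i. 0) = 0"
  by (simp add: quad_form_def)

lemma quad_form_add_unit_vec:
  "quad_form S (\<lambda>i. x i + c * unit_vec k i) =
   quad_form S x + c * ((\<Sum>j\<in>UNIV. S k j * x j) + (\<Sum>i\<in>UNIV. S i k * x i)) + c * c * S k k"
proof -
  have row: "(\<Sum>j\<in>UNIV. S i j * unit_vec k j) = S i k" for i
    unfolding unit_vec_def by (simp add: if_distrib cong: if_cong)
  have col: "(\<Sum>i\<in>UNIV. unit_vec k i * y i) = y k" for y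
  proof -
    have "(\<Sum>i\<in>UNIV. unit_vec k i * y i) = (\<Sum>i\<in>UNIV. if i = k then y i else 0)"
      by (rule sum.cong) (auto simp: unit_vec_def)
    then show ?thesis by simp
  qed
  have "quad_form S (\<lambda>i. x i + c * unit_vec k i) =
     quad_form S x + c * (\<Sum>i\<in>UNIV. x i * (\<Sum>j\<in>UNIV. S i j * unit_vec k j))
     + c * (\<Sum>i\<in>UNIV. unit_vec k i * (\<Sum>j\<in>UNIV. S i j * x j))
     + c * c * (\<Sum>i\<in>UNIV. unit_vec k i * (\<Sum>j\<in>UNIV. S i j * unit_vec k j))"
    unfolding quad_form_def
    by (simp add: algebra_simps sum.distrib sum_distrib_left)
  also have "\<dots> = quad_form S x + c * (\<Sum>i\<in>UNIV. S i k * x i)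
     + c * (\<Sum>j\<in>UNIV. S k j * x j) + c * c * S k k"
    by (simp only: row col) (simp add: mult.commute)
  finally show ?thesis by (simp add: algebra_simps)
qed

lemma psd_diagonal_zero_imp_row_zero:
  assumes sym: "\<And>i j. S i j = S j i" and psd: "\<And>x. 0 \<le> quad_form S x" and "S k k = 0"
  shows "S k j = 0"
proof (rule ccontr)
  assume ne: "S k j \<noteq> 0"
  have diag: "quad_form S (unit_vec j) = S j j"
    using quad_form_add_unit_vec[of S "\<lambda>i. 0" 1 j] by simp
  define c where "c = - (S j j + 1) / (2 * S k j)"
  have "quad_form S (\<lambda>i. unit_vec j i + c * unit_vec k i) = S j j + c * (S k j + S j k)"
    using quad_form_add_unit_vec[of S "unit_vec j" c k] \<open>S k k = 0\<close> diag
    by (simp add: unit_vec_def if_distrib cong: if_cong)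
  also have "\<dots> = -1" using ne sym[of j k] by (simp add: c_def)
  finally show False using psd[of "\<lambda>i. unit_vec j i + c * unit_vec k i"] by simp
qed

lemma schur_complement_psd:
  assumes sym: "\<And>i j. S i j = S j i" and psd: "\<And>x. 0 \<le> quad_form S x" and pos: "S k k > 0"
  shows "0 \<le> quad_form (\<lambda>i j. S i j - S k i * S k j / S k k) x"
proof -
  define \<sigma> where "\<sigma> = (\<Sum>j\<in>UNIV. S k j * x j)"
  have col: "(\<Sum>i\<in>UNIV. S i k * x i) = \<sigma>" unfolding \<sigma>_def using sym by metis
  have "0 \<le> quad_form S (\<lambda>i. x i + (- \<sigma> / S k k) * unit_vec k i)" by (rule psd)
  also have "\<dots> = quad_form S x + (- \<sigma> / S k k) * (\<sigma> + \<sigma>) + (- \<sigma> / S k k) * (- \<sigma> / S k k) * S k k"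
    using quad_form_add_unit_vec[of S x "- \<sigma> / S k k" k] col by (simp add: \<sigma>_def)
  also have "\<dots> = quad_form S x - \<sigma> * \<sigma> / S k k" using pos by (simp add: field_simps)
  also have "\<dots> = quad_form (\<lambda>i j. S i j - S k i * S k j / S k k) x"
    unfolding quad_form_def \<sigma>_def
    by (simp add: algebra_simps sum_subtractf sum_distrib_left sum_distrib_right sum_divide_distrib)
  finally show ?thesis .
qed

text \<open>Induction on the support of \<open>S\<close>: each elimination step removes one index and
  splits off the rank-one part \<open>s s\<^sup>T / d\<close>, whose pairing with \<open>H\<close> is \<open>quad_form H s / d \<le> 0\<close>.\<close>

lemma psd_nsd_pairing_nonpos_supported:
  fixes H :: "'n::finite \<Rightarrow> 'n \<Rightarrow> real"
  assumes Hneg: "\<And>x. quad_form H x \<le> 0" and "finite T"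
    and "\<And>i j. S i j = S j i" and "\<And>x. 0 \<le> quad_form S x"
    and "\<And>i j. i \<notin> T \<or> j \<notin> T \<Longrightarrow> S i j = 0"
  shows "(\<Sum>i\<in>UNIV. \<Sum>j\<in>UNIV. S i j * H i j) \<le> 0"
  using assms(2-)
proof (induction T arbitrary: S rule: finite_induct)
  case empty then show ?case by simp
next
  case (insert k T)
  note sym = insert.prems(1) and psd = insert.prems(2) and supp = insert.prems(3)
  have "S k k \<ge> 0" using psd[of "unit_vec k"] quad_form_add_unit_vec[of S "\<lambda>i. 0" 1 k] by simp
  then consider "S k k = 0" | "S k k > 0" by linarith
  then show ?case
  proof cases
    case 1
    then have "S k j = 0" for j by (rule psd_diagonal_zero_imp_row_zero[OF sym psd])
    then have "i \<notin> T \<or> j \<notin> T \<Longrightarrow> S i j = 0" for i j using supp sym by (metis insertE)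
    then show ?thesis using insert.IH sym psd by blast
  next
    case 2
    define S' where "S' i j = S i j - S k i * S k j / S k k" for i j
    have "S' i j = S' j i" for i j using sym by (simp add: S'_def mult.commute)
    moreover have "0 \<le> quad_form S' x" for x
      unfolding S'_def by (rule schur_complement_psd[OF sym psd 2])
    moreover have "i \<notin> T \<or> j \<notin> T \<Longrightarrow> S' i j = 0" for i j
      using 2 supp[of k i] supp[of k j] supp[of i j] sym[of i k]
      by (cases "i = k \<or> j = k") (auto simp: S'_def)
    ultimately have "(\<Sum>i\<in>UNIV. \<Sum>j\<in>UNIV. S' i j * H i j) \<le> 0"
      by (rule insert.IH)
    moreover have "(\<Sum>i\<in>UNIV. \<Sum>j\<in>UNIV. S i j * H i j) =
        (\<Sum>i\<in>UNIV. \<Sum>j\<in>UNIV. S' i j * H i j) + quad_form H (S k) / S k k"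
      unfolding S'_def quad_form_def
      by (simp add: algebra_simps sum_subtractf sum.distrib sum_divide_distrib)
    moreover have "quad_form H (S k) / S k k \<le> 0" using Hneg 2 by (simp add: divide_nonpos_pos)
    ultimately show ?thesis by simp
  qed
qed

lemma psd_nsd_pairing_nonpos:
  fixes A H :: "'n::finite \<Rightarrow> 'n \<Rightarrow> real"
  assumes A: "\<And>x. 0 \<le> quad_form A x" and Hn: "\<And>x. quad_form H x \<le> 0" and Hs: "\<And>i j. H i j = H j i"
  shows "(\<Sum>i\<in>UNIV. \<Sum>j\<in>UNIV. A i j * H i j) \<le> 0"
proof -
  define S where "S i j = (A i j + A j i) / 2" for i j
  have transpose: "(\<Sum>i\<in>UNIV. \<Sum>j\<in>UNIV. F j i) = (\<Sum>i\<in>UNIV. \<Sum>j\<in>UNIV. F i j)" for F :: "'n \<Rightarrow> 'n \<Rightarrow> real"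
    by (rule sum.swap)
  have "quad_form S x = (quad_form A x + (\<Sum>i\<in>UNIV. \<Sum>j\<in>UNIV. A j i * x i * x j)) / 2" for x
    unfolding quad_form_def S_def by (simp add: add_divide_distrib distrib_right sum.distrib sum_divide_distrib)
  moreover have "(\<Sum>i\<in>UNIV. \<Sum>j\<in>UNIV. A j i * x i * x j) = quad_form A x" for x
    unfolding quad_form_def using transpose[of "\<lambda>i j. A i j * x i * x j"] by (simp add: mult_ac)
  ultimately have "quad_form S x = quad_form A x" for x by simp
  then have "(\<Sum>i\<in>UNIV. \<Sum>j\<in>UNIV. S i j * H i j) \<le> 0"
    using psd_nsd_pairing_nonpos_supported[OF Hn, of UNIV S] A by (simp add: S_def add.commute)
  moreover have "(\<Sum>i\<in>UNIV. \<Sum>j\<in>UNIV. S i j * H i j) = (\<Sum>i\<in>UNIV. \<Sum>j\<in>UNIV. A i j * H i j)"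
    using transpose[of "\<lambda>i j. A i j * H j i"] Hs unfolding S_def
    by (simp add: distrib_right sum.distrib add_divide_distrib sum_divide_distrib[symmetric])
  ultimately show ?thesis by simp
qed

section \<open>The comparison principle\<close>

lemma CL_has_partial_derivatives:
  assumes "x \<in> CL G" "t > 0" "z \<in> G"
  shows "((\<lambda>s. x s z) has_real_derivative pdt x t z) (at t)"
    and "((\<lambda>h. x t (z + h *\<^sub>R axis i 1)) has_real_derivative pdz i (x t) z) (at 0)"
    and "((\<lambda>h. pdz j (x t) (z + h *\<^sub>R axis i 1)) has_real_derivative pdz i (pdz j (x t)) z) (at 0)"
  using assms unfolding CL_def pdt_def pdz_def
  by (auto simp: DERIV_deriv_iff_real_differentiable)

lemma CL_continuous_partials:
  assumes "x \<in> CL G" "t > 0"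
  shows "continuous_on G (pdz i (x t))" "continuous_on G (pdz i (pdz j (x t)))"
proof -
  have im: "(\<lambda>z. (t, z)) ` G \<subseteq> {0<..} \<times> G" using assms by auto
  have "continuous_on ({0<..} \<times> G) (\<lambda>(t,z). pdz i (x t) z)"
    and "continuous_on ({0<..} \<times> G) (\<lambda>(t,z). pdz i (pdz j (x t)) z)"
    using assms(1) unfolding CL_def by auto
  from this[THEN continuous_on_compose2, OF continuous_on_Pair[OF continuous_on_const continuous_on_id] im]
  show "continuous_on G (pdz i (x t))" "continuous_on G (pdz i (pdz j (x t)))" by simp_all
qed

lemma CL_continuous:
  assumes "x \<in> CL G"
  shows "continuous_on ({0..} \<times> closure G) (\<lambda>p. x (fst p) (snd p))"
  using assms unfolding CL_def by (simp add: split_def)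

lemma CL_continuous_slice:
  assumes "x \<in> CL G" "t \<ge> 0"
  shows "continuous_on (closure G) (x t)"
proof -
  have "(\<lambda>z. (t, z)) ` closure G \<subseteq> {0..} \<times> closure G" using assms(2) by auto
  from continuous_on_compose2[OF CL_continuous[OF assms(1)]
      continuous_on_Pair[OF continuous_on_const continuous_on_id] this]
  show ?thesis by simp
qed

lemma standing_psd:
  assumes "standing G a f" "z \<in> closure G"
  shows "0 \<le> quad_form (\<lambda>i j. a i j z) x"
proof -
  obtain K where K: "K > 0" "K * (norm (vec_lambda x))\<^sup>2
      \<le> (\<Sum>i\<in>UNIV. \<Sum>j\<in>UNIV. a i j z * (vec_lambda x)$i * (vec_lambda x)$j)"
    using assms unfolding standing_def by blast
  have "0 \<le> K * (norm (vec_lambda x))\<^sup>2" using K(1) by simp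
  with K(2) show ?thesis unfolding quad_form_def vec_lambda_beta by linarith
qed

lemma DERIV_nonneg_at_left_max:
  fixes \<phi> :: "real \<Rightarrow> real"
  assumes "(\<phi> has_real_derivative D) (at t0)" "t0 > 0"
    and "\<And>s. 0 \<le> s \<Longrightarrow> s \<le> t0 \<Longrightarrow> \<phi> s \<le> \<phi> t0"
  shows "0 \<le> D"
proof (rule ccontr)
  assume "\<not> 0 \<le> D"
  then obtain d where d: "d > 0" "\<And>h. h > 0 \<Longrightarrow> h < d \<Longrightarrow> \<phi> t0 < \<phi> (t0 - h)"
    using DERIV_neg_dec_left[OF assms(1)] by force
  define h where "h = min d t0 / 2"
  have "h > 0" "h < d" "h < t0" using d \<open>t0 > 0\<close> by (auto simp: h_def)
  then show False using d(2) assms(3)[of "t0 - h"] by fastforce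
qed

text \<open>The Hessian of the difference is symmetric and negative semidefinite at the maximum, so its
  pairing with the positive semidefinite \<open>a\<close> is nonpositive.\<close>

lemma elliptic_part_le_at_interior_max:
  assumes oG: "open G" and x1: "x1 \<in> CL G" and x2: "x2 \<in> CL G" and t0: "t0 > 0" and z0: "z0 \<in> G"
    and a: "\<And>x. 0 \<le> quad_form (\<lambda>i j. a i j z0) x"
    and mx: "\<And>z. z \<in> G \<Longrightarrow> x1 t0 z - x2 t0 z \<le> x1 t0 z0 - x2 t0 z0"
  shows "grad (x1 t0) z0 = grad (x2 t0) z0"
    and "(\<Sum>i\<in>UNIV. \<Sum>j\<in>UNIV. a i j z0 * pdz i (pdz j (x1 t0)) z0)
       \<le> (\<Sum>i\<in>UNIV. \<Sum>j\<in>UNIV. a i j z0 * pdz i (pdz j (x2 t0)) z0)"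
proof -
  define g where "g z = x1 t0 z - x2 t0 z" for z
  define P where "P i z = pdz i (x1 t0) z - pdz i (x2 t0) z" for i z
  define Q where "Q i j z = pdz i (pdz j (x1 t0)) z - pdz i (pdz j (x2 t0)) z" for i j z
  have dP: "((\<lambda>h. g (w + h *\<^sub>R axis i 1)) has_real_derivative P i w) (at 0)" if "w \<in> G" for w i
    unfolding g_def P_def
    by (intro DERIV_diff CL_has_partial_derivatives(2)[OF x1 t0 that] CL_has_partial_derivatives(2)[OF x2 t0 that])
  have dQ: "((\<lambda>h. P j (w + h *\<^sub>R axis i 1)) has_real_derivative Q i j w) (at 0)" if "w \<in> G" for w i j
    unfolding Q_def P_def
    by (intro DERIV_diff CL_has_partial_derivatives(3)[OF x1 t0 that] CL_has_partial_derivatives(3)[OF x2 t0 that])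
  have cP: "continuous_on G (P i)" for i
    unfolding P_def by (intro continuous_on_diff CL_continuous_partials(1)[OF x1 t0] CL_continuous_partials(1)[OF x2 t0])
  have cQ: "continuous_on G (Q i j)" for i j
    unfolding Q_def by (intro continuous_on_diff CL_continuous_partials(2)[OF x1 t0] CL_continuous_partials(2)[OF x2 t0])
  have mx': "g z \<le> g z0" if "z \<in> G" for z using mx[OF that] by (simp add: g_def)
  have "quad_form (\<lambda>i j. Q i j z0) x \<le> 0" for x
    using hessian_form_nonpos_at_local_max[OF oG z0 dP dQ cP cQ mx', of "vec_lambda x"]
    by (simp add: quad_form_def mult_ac)
  then have "(\<Sum>i\<in>UNIV. \<Sum>j\<in>UNIV. a i j z0 * Q i j z0) \<le> 0"
    using psd_nsd_pairing_nonpos[OF a] mixed_partials_symmetric[OF oG z0 dP dQ cQ] by blast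
  then show "(\<Sum>i\<in>UNIV. \<Sum>j\<in>UNIV. a i j z0 * pdz i (pdz j (x1 t0)) z0)
       \<le> (\<Sum>i\<in>UNIV. \<Sum>j\<in>UNIV. a i j z0 * pdz i (pdz j (x2 t0)) z0)"
    by (simp add: Q_def right_diff_distrib sum_subtractf)
  obtain r where r: "r > 0" "ball z0 r \<subseteq> G" using oG z0 open_contains_ball by blast
  have "P i z0 = 0" for i
  proof (rule DERIV_local_max[OF dP[OF z0] r(1)], intro allI impI)
    fix y :: real assume "\<bar>0 - y\<bar> < r"
    then have "z0 + y *\<^sub>R axis i 1 \<in> G" using r by (auto simp: dist_norm intro!: subsetD[OF r(2)])
    then show "g (z0 + y *\<^sub>R axis i 1) \<le> g (z0 + 0 *\<^sub>R axis i 1)" using mx' by simp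
  qed
  then show "grad (x1 t0) z0 = grad (x2 t0) z0"
    by (simp add: grad_def vec_eq_iff P_def)
qed

lemma time_derivative_le_at_interior_max:
  assumes st: "standing G a f" and x1: "x1 \<in> CL G" and x2: "x2 \<in> CL G"
    and t0: "t0 > 0" and z0: "z0 \<in> G"
    and pde: "Lop a f x1 t0 z0 = 0" "Lop a f x2 t0 z0 = 0"
    and mx: "\<And>z. z \<in> G \<Longrightarrow> x1 t0 z - x2 t0 z \<le> x1 t0 z0 - x2 t0 z0"
  shows "pdt x1 t0 z0 - pdt x2 t0 z0
    \<le> f z0 (x1 t0 z0) (grad (x2 t0) z0) - f z0 (x2 t0 z0) (grad (x2 t0) z0)"
proof -
  have oG: "open G" using st by (simp add: standing_def)
  have "0 \<le> quad_form (\<lambda>i j. a i j z0) x" for x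
    using standing_psd[OF st] z0 closure_subset by blast
  note max = elliptic_part_le_at_interior_max[where a = a, OF oG x1 x2 t0 z0 this mx]
  show ?thesis using pde max by (simp add: Lop_def)
qed

lemma H2_on_compact:
  fixes w1 w2 :: "'a::topological_space \<Rightarrow> real"
  assumes h2: "H2 G f" and K: "compact K" and c: "continuous_on K w1" "continuous_on K w2"
  obtains k where "\<And>p z \<xi>. p \<in> K \<Longrightarrow> z \<in> G \<Longrightarrow> w2 p < w1 p \<Longrightarrow>
    f z (w1 p) \<xi> - f z (w2 p) \<xi> < k * (w1 p - w2 p)"
proof -
  obtain M1 where M1: "\<And>p. p \<in> K \<Longrightarrow> \<bar>w1 p\<bar> \<le> M1"
    using compact_imp_bounded[OF compact_continuous_image[OF c(1) K]] unfolding bounded_real by auto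
  obtain M2 where M2: "\<And>p. p \<in> K \<Longrightarrow> \<bar>w2 p\<bar> \<le> M2"
    using compact_imp_bounded[OF compact_continuous_image[OF c(2) K]] unfolding bounded_real by auto
  define M where "M = max M1 M2"
  have "\<exists>k>0. \<forall>w1\<in>{-M..M}. \<forall>w2\<in>{-M..M}. w1 > w2 \<longrightarrow> (\<forall>z\<in>G. \<forall>\<xi>. f z w1 \<xi> - f z w2 \<xi> < k * (w1 - w2))"
    using h2 unfolding H2_def by (simp only: bounded_closed_interval simp_thms)
  then obtain k where k: "\<And>v1 v2 z \<xi>. v1 \<in> {-M..M} \<Longrightarrow> v2 \<in> {-M..M} \<Longrightarrow> v1 > v2 \<Longrightarrow> z \<in> G \<Longrightarrow>
      f z v1 \<xi> - f z v2 \<xi> < k * (v1 - v2)"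
    by blast
  show ?thesis
  proof (rule that)
    fix p z \<xi> assume "p \<in> K" "z \<in> G" "w2 p < w1 p"
    then show "f z (w1 p) \<xi> - f z (w2 p) \<xi> < k * (w1 p - w2 p)"
      using k[of "w1 p" "w2 p" z] M1 M2 by (force simp: M_def)
  qed
qed

lemma positive_max_of_weighted_difference:
  fixes G :: "(real^'n) set"
  assumes bG: "bounded G"
    and s1: "is_sol G a f x01 u1 x1" and s2: "is_sol G a f x02 u2 x2"
    and i0: "\<And>z. z \<in> G \<Longrightarrow> x01 z \<le> x02 z"
    and bd: "\<And>t z. t \<ge> 0 \<Longrightarrow> z \<in> frontier G \<Longrightarrow> u1 t z \<le> u2 t z"
    and T: "T \<ge> 0" and zs: "zs \<in> closure G" and pos: "x2 T zs < x1 T zs"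
  obtains t0 z0 where "0 < t0" "t0 \<le> T" "z0 \<in> G" "x2 t0 z0 < x1 t0 z0"
    "\<And>t z. 0 \<le> t \<Longrightarrow> t \<le> T \<Longrightarrow> z \<in> closure G \<Longrightarrow>
      exp (- lam * t) * (x1 t z - x2 t z) \<le> exp (- lam * t0) * (x1 t0 z0 - x2 t0 z0)"
proof -
  define Ks where "Ks = {0..T} \<times> closure G"
  have Kcomp: "compact Ks" unfolding Ks_def using bG by (intro compact_Times compact_Icc) (simp add: compact_closure)
  have "x1 \<in> CL G" "x2 \<in> CL G" using s1 s2 by (simp_all add: is_sol_def)
  moreover have "Ks \<subseteq> {0..} \<times> closure G" unfolding Ks_def by auto
  ultimately have "continuous_on Ks (\<lambda>p. x1 (fst p) (snd p))" "continuous_on Ks (\<lambda>p. x2 (fst p) (snd p))"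
    using CL_continuous continuous_on_subset by blast+
  then have "continuous_on Ks (\<lambda>p. exp (- lam * fst p) * (x1 (fst p) (snd p) - x2 (fst p) (snd p)))"
    by (intro continuous_intros)
  moreover have "(T, zs) \<in> Ks" using T zs by (simp add: Ks_def)
  ultimately obtain p0 where p0: "p0 \<in> Ks"
    and p0max: "\<And>p. p \<in> Ks \<Longrightarrow> exp (- lam * fst p) * (x1 (fst p) (snd p) - x2 (fst p) (snd p))
      \<le> exp (- lam * fst p0) * (x1 (fst p0) (snd p0) - x2 (fst p0) (snd p0))"
    using continuous_attains_sup[OF Kcomp] by blast
  obtain t0 z0 where p0eq: "p0 = (t0, z0)" by fastforce
  have mx: "exp (- lam * t) * (x1 t z - x2 t z) \<le> exp (- lam * t0) * (x1 t0 z0 - x2 t0 z0)"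
    if "(t, z) \<in> Ks" for t z
    using p0max[OF that] by (simp add: p0eq)
  have t0: "0 \<le> t0" "t0 \<le> T" and z0c: "z0 \<in> closure G" using p0 by (simp_all add: Ks_def p0eq)
  have "0 < exp (- lam * T) * (x1 T zs - x2 T zs)" using pos by simp
  also have "\<dots> \<le> exp (- lam * t0) * (x1 t0 z0 - x2 t0 z0)" using mx T zs by (simp add: Ks_def)
  finally have w0: "x2 t0 z0 < x1 t0 z0" by (simp add: zero_less_mult_iff)
  have z0: "z0 \<in> G"
  proof (rule ccontr)
    assume "z0 \<notin> G"
    then have "z0 \<in> frontier G" using z0c closure_Un_frontier by blast
    then have "x1 t0 z0 \<le> x2 t0 z0" using s1 s2 bd[OF t0(1)] t0(1) unfolding is_sol_def by simp
    then show False using w0 by simp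
  qed
  have "t0 \<noteq> 0" using s1 s2 i0[OF z0] z0 w0 by (auto simp: is_sol_def)
  with t0 z0 w0 mx show ?thesis by (intro that) (auto simp: Ks_def)
qed

text \<open>With \<open>\<lambda>\<close> beyond the one-sided Lipschitz constant of \<open>f\<close> from (H2), a positive maximum of
  \<open>e\<^sup>-\<^sup>\<lambda>\<^sup>t (x1 - x2)\<close> over \<open>[0, T] \<times> closure G\<close> is impossible: it lies neither on the parabolic
  boundary nor in the interior.\<close>

lemma comparison_principle:
  fixes G :: "(real^'n) set"
  assumes st: "standing G a f" and h2: "H2 G f"
    and s1: "is_sol G a f x01 u1 x1" and s2: "is_sol G a f x02 u2 x2"
    and i0: "\<And>z. z \<in> G \<Longrightarrow> x01 z \<le> x02 z"
    and bd: "\<And>t z. t \<ge> 0 \<Longrightarrow> z \<in> frontier G \<Longrightarrow> u1 t z \<le> u2 t z"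
    and T: "T \<ge> 0" and zs: "zs \<in> closure G"
  shows "x1 T zs \<le> x2 T zs"
proof (rule ccontr)
  assume "\<not> x1 T zs \<le> x2 T zs"
  have bG: "bounded G" using st by (simp add: standing_def)
  have x1: "x1 \<in> CL G" and x2: "x2 \<in> CL G" using s1 s2 by (simp_all add: is_sol_def)
  define Ks where "Ks = {0..T} \<times> closure G"
  have "compact Ks" unfolding Ks_def using bG by (intro compact_Times compact_Icc) (simp add: compact_closure)
  moreover have "Ks \<subseteq> {0..} \<times> closure G" unfolding Ks_def by auto
  then have "continuous_on Ks (\<lambda>p. x1 (fst p) (snd p))" "continuous_on Ks (\<lambda>p. x2 (fst p) (snd p))"
    using CL_continuous[OF x1] CL_continuous[OF x2] by (auto intro: continuous_on_subset)
  ultimately obtain k where k: "\<And>p z \<xi>. p \<in> Ks \<Longrightarrow> z \<in> G \<Longrightarrow> x2 (fst p) (snd p) < x1 (fst p) (snd p) \<Longrightarrow>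
      f z (x1 (fst p) (snd p)) \<xi> - f z (x2 (fst p) (snd p)) \<xi> < k * (x1 (fst p) (snd p) - x2 (fst p) (snd p))"
    using H2_on_compact[OF h2] by blast
  obtain t0 z0 where t0: "0 < t0" "t0 \<le> T" and z0: "z0 \<in> G" and w0: "x2 t0 z0 < x1 t0 z0"
    and mx: "\<And>t z. 0 \<le> t \<Longrightarrow> t \<le> T \<Longrightarrow> z \<in> closure G \<Longrightarrow>
      exp (- (k + 1) * t) * (x1 t z - x2 t z) \<le> exp (- (k + 1) * t0) * (x1 t0 z0 - x2 t0 z0)"
    using positive_max_of_weighted_difference[OF bG s1 s2 i0 bd T zs] \<open>\<not> x1 T zs \<le> x2 T zs\<close>
    unfolding not_le by blast
  define w0 where "w0 = x1 t0 z0 - x2 t0 z0"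
  define D where "D = pdt x1 t0 z0 - pdt x2 t0 z0"
  have "0 \<le> exp (- (k + 1) * t0) * (D - (k + 1) * w0)"
  proof (rule DERIV_nonneg_at_left_max[OF _ t0(1)])
    show "((\<lambda>s. exp (- (k + 1) * s) * (x1 s z0 - x2 s z0)) has_real_derivative
        exp (- (k + 1) * t0) * (D - (k + 1) * w0)) (at t0)"
      unfolding D_def w0_def
      by (auto intro!: derivative_eq_intros CL_has_partial_derivatives(1)[OF x1 t0(1) z0]
          CL_has_partial_derivatives(1)[OF x2 t0(1) z0] simp: algebra_simps)
    show "exp (- (k + 1) * s) * (x1 s z0 - x2 s z0) \<le> exp (- (k + 1) * t0) * (x1 t0 z0 - x2 t0 z0)"
      if "0 \<le> s" "s \<le> t0" for s
      using mx[of s z0] that t0 z0 closure_subset by auto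
  qed
  then have time: "(k + 1) * w0 \<le> D" by (simp add: zero_le_mult_iff)
  have "x1 t0 z - x2 t0 z \<le> w0" if "z \<in> G" for z
    using mx[of t0 z] t0 that closure_subset by (force simp: w0_def)
  then have "D \<le> f z0 (x1 t0 z0) (grad (x2 t0) z0) - f z0 (x2 t0 z0) (grad (x2 t0) z0)"
    using time_derivative_le_at_interior_max[OF st x1 x2 t0(1) z0] s1 s2 t0 z0
    unfolding D_def w0_def is_sol_def by blast
  also have "\<dots> < k * w0"
    using k[of "(t0, z0)" z0] t0 z0 closure_subset w0 by (force simp: Ks_def w0_def)
  finally show False using time w0 by (simp add: algebra_simps w0_def)
qed

section \<open>\<open>L\<^sup>p\<close> estimates\<close>

definition bounded_continuous_on :: "('n::finite) space set \<Rightarrow> ('n space \<Rightarrow> real) \<Rightarrow> bool" where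
  "bounded_continuous_on G g \<longleftrightarrow> continuous_on G g \<and> (\<exists>B. \<forall>z\<in>G. \<bar>g z\<bar> \<le> B)"

lemma bounded_continuous_on_const: "bounded_continuous_on G (\<lambda>z. c)"
  unfolding bounded_continuous_on_def by (auto intro: continuous_on_const)

lemma bounded_continuous_on_closure:
  fixes G :: "(real^'n) set"
  assumes "bounded G" "continuous_on (closure G) h"
  shows "bounded_continuous_on G h"
proof -
  have "compact (closure G)" using assms(1) by (simp add: compact_closure)
  then have "bounded (h ` closure G)" using compact_imp_bounded compact_continuous_image assms(2) by blast
  then obtain B where "\<And>z. z \<in> closure G \<Longrightarrow> \<bar>h z\<bar> \<le> B" unfolding bounded_real by auto
  then show ?thesis unfolding bounded_continuous_on_def
    using continuous_on_subset[OF assms(2) closure_subset] closure_subset by blast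
qed

lemma integrable_abs_powr_bounded_continuous:
  fixes G :: "(real^'n) set"
  assumes "open G" "bounded G" "bounded_continuous_on G g" "q > 0"
  shows "(\<lambda>z. \<bar>g z\<bar> powr q) integrable_on G"
proof -
  obtain B where B: "\<And>z. z \<in> G \<Longrightarrow> \<bar>g z\<bar> \<le> B" and c: "continuous_on G g"
    using assms(3) unfolding bounded_continuous_on_def by blast
  have G: "G \<in> lmeasurable" using assms(1,2) by (simp add: lmeasurable_open)
  show ?thesis
  proof (rule measurable_bounded_by_integrable_imp_integrable[of _ G "\<lambda>x. B powr q"])
    show "(\<lambda>z. \<bar>g z\<bar> powr q) \<in> borel_measurable (lebesgue_on G)"
      using assms(4) G
      by (intro continuous_imp_measurable_on_sets_lebesgue continuous_on_powr' continuous_intros c)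
        (auto simp: fmeasurableD)
    show "norm (\<bar>g z\<bar> powr q) \<le> B powr q" if "z \<in> G" for z
      using powr_mono2[of q "\<bar>g z\<bar>" B] B[OF that] assms(4) by simp
  qed (use G integrable_on_const[OF G] in \<open>auto simp: fmeasurableD\<close>)
qed

lemma bdd_above_abs_image:
  assumes "bounded_continuous_on G g"
  shows "bdd_above (insert 0 ((\<lambda>z. \<bar>g z\<bar>) ` G))"
proof -
  obtain B where "\<And>z. z \<in> G \<Longrightarrow> \<bar>g z\<bar> \<le> B"
    using assms unfolding bounded_continuous_on_def by blast
  then show ?thesis by (intro bdd_above_insert[THEN iffD2] bdd_aboveI2[of _ _ B]) auto
qed

lemma lpnorm_nonneg:
  assumes "bounded_continuous_on G g"
  shows "0 \<le> lpnorm G p g"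
  unfolding lpnorm_def using cSup_upper[OF insertI1 bdd_above_abs_image[OF assms]] by auto

lemma abs_le_lpnorm_infinity:
  assumes "bounded_continuous_on G g" "z \<in> G"
  shows "\<bar>g z\<bar> \<le> lpnorm G \<infinity> g"
  unfolding lpnorm_def using cSup_upper[OF _ bdd_above_abs_image[OF assms(1)], of "\<bar>g z\<bar>"] assms(2) by auto

lemma abs_powr_le_sum3:
  fixes q a b c d :: real
  assumes "q \<ge> 1" "\<bar>a\<bar> \<le> \<bar>b\<bar> + \<bar>c\<bar> + \<bar>d\<bar>"
  shows "\<bar>a\<bar> powr q \<le> 3 powr q * (\<bar>b\<bar> powr q + \<bar>c\<bar> powr q + \<bar>d\<bar> powr q)"
proof -
  define m where "m = max \<bar>b\<bar> (max \<bar>c\<bar> \<bar>d\<bar>)"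
  have "\<bar>b\<bar> \<le> m" "\<bar>c\<bar> \<le> m" "\<bar>d\<bar> \<le> m" by (auto simp: m_def)
  then have "\<bar>a\<bar> \<le> 3 * m" using assms(2) by linarith
  then have "\<bar>a\<bar> powr q \<le> (3 * m) powr q" using assms(1) by (intro powr_mono2) auto
  also have "\<dots> = 3 powr q * m powr q" by (simp add: m_def powr_mult)
  also have "m powr q \<le> \<bar>b\<bar> powr q + \<bar>c\<bar> powr q + \<bar>d\<bar> powr q"
    unfolding m_def by (auto simp: max_def add_nonneg_nonneg)
  then have "3 powr q * m powr q \<le> 3 powr q * (\<bar>b\<bar> powr q + \<bar>c\<bar> powr q + \<bar>d\<bar> powr q)"
    by (intro mult_left_mono) auto
  finally show ?thesis .
qed

lemma lpnorm_infinity_le_sum3: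
  assumes gd: "bounded_continuous_on G g1" "bounded_continuous_on G g2" "bounded_continuous_on G g3"
    and le: "\<And>z. z \<in> G \<Longrightarrow> \<bar>g z\<bar> \<le> \<bar>g1 z\<bar> + \<bar>g2 z\<bar> + \<bar>g3 z\<bar>"
  shows "lpnorm G \<infinity> g \<le> lpnorm G \<infinity> g1 + lpnorm G \<infinity> g2 + lpnorm G \<infinity> g3"
proof -
  have "0 \<le> lpnorm G \<infinity> g1 + lpnorm G \<infinity> g2 + lpnorm G \<infinity> g3"
    by (intro add_nonneg_nonneg lpnorm_nonneg gd)
  moreover have "\<bar>g z\<bar> \<le> lpnorm G \<infinity> g1 + lpnorm G \<infinity> g2 + lpnorm G \<infinity> g3" if "z \<in> G" for z
    using le[OF that] abs_le_lpnorm_infinity[OF gd(1) that] abs_le_lpnorm_infinity[OF gd(2) that]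
      abs_le_lpnorm_infinity[OF gd(3) that] by linarith
  ultimately show ?thesis
    unfolding lpnorm_def[of G \<infinity> g] by (auto intro!: cSup_least)
qed

lemma lpnorm_finite_le_sum3:
  fixes G :: "(real^'n) set"
  assumes G: "open G" "bounded G" and p: "1 \<le> p" "p \<noteq> \<infinity>"
    and gd: "bounded_continuous_on G g" "bounded_continuous_on G g1"
      "bounded_continuous_on G g2" "bounded_continuous_on G g3"
    and le: "\<And>z. z \<in> G \<Longrightarrow> \<bar>g z\<bar> \<le> \<bar>g1 z\<bar> + \<bar>g2 z\<bar> + \<bar>g3 z\<bar>"
  shows "lpnorm G p g \<le> 9 * (lpnorm G p g1 + lpnorm G p g2 + lpnorm G p g3)"
proof -
  define q where "q = real_of_ereal p"
  have q: "q \<ge> 1" using p by (cases p) (auto simp: q_def)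
  define I where "I h = integral G (\<lambda>z. \<bar>h z\<bar> powr q)" for h
  have int: "(\<lambda>z. \<bar>h z\<bar> powr q) integrable_on G" if "bounded_continuous_on G h" for h
    using integrable_abs_powr_bounded_continuous[OF G that] q by simp
  have I0: "0 \<le> I h" if "bounded_continuous_on G h" for h
    unfolding I_def by (rule integral_nonneg[OF int[OF that]]) simp
  have lpI: "lpnorm G p h = I h powr (1 / q)" for h
    using p by (simp add: lpnorm_def I_def q_def)
  have "I g \<le> integral G (\<lambda>z. 3 powr q * (\<bar>g1 z\<bar> powr q + \<bar>g2 z\<bar> powr q + \<bar>g3 z\<bar> powr q))"
    unfolding I_def
    by (rule integral_le[OF int[OF gd(1)]])
      (use int gd q le abs_powr_le_sum3 in \<open>auto intro!: integrable_add integrable_on_mult_right\<close>)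
  also have "\<dots> = 3 powr q * (I g1 + I g2 + I g3)"
    using int gd by (simp add: I_def integral_add integrable_add)
  finally have Ig: "I g \<le> 3 powr q * (I g1 + I g2 + I g3)" .
  define Im where "Im = max (I g1) (max (I g2) (I g3))"
  have "I g1 + I g2 + I g3 \<le> 3 * Im" by (simp add: Im_def)
  then have Ig2: "I g \<le> 3 powr q * (3 * Im)" using Ig by (meson order.trans mult_left_mono powr_ge_zero)
  have "lpnorm G p g = I g powr (1 / q)" by (rule lpI)
  also have "\<dots> \<le> (3 powr q * (3 * Im)) powr (1 / q)" using Ig2 I0[OF gd(1)] q by (intro powr_mono2) auto
  also have "\<dots> = 3 * (3 powr (1 / q) * Im powr (1 / q))"
    using q by (simp add: powr_mult powr_powr)
  also have "\<dots> \<le> 3 * (3 * Im powr (1 / q))"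
    using powr_mono[of "1 / q" 1 3] q by (intro mult_left_mono mult_right_mono) auto
  also have "Im powr (1 / q) \<le> lpnorm G p g1 + lpnorm G p g2 + lpnorm G p g3"
    unfolding lpI Im_def by (auto simp: max_def add_nonneg_nonneg)
  finally show ?thesis by simp
qed

lemma lpnorm_le_sum3:
  fixes G :: "(real^'n) set"
  assumes "open G" "bounded G" "1 \<le> p"
    and gd: "bounded_continuous_on G g" "bounded_continuous_on G g1"
      "bounded_continuous_on G g2" "bounded_continuous_on G g3"
    and le: "\<And>z. z \<in> G \<Longrightarrow> \<bar>g z\<bar> \<le> \<bar>g1 z\<bar> + \<bar>g2 z\<bar> + \<bar>g3 z\<bar>"
  shows "lpnorm G p g \<le> 9 * (lpnorm G p g1 + lpnorm G p g2 + lpnorm G p g3)"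
proof (cases "p = \<infinity>")
  case True
  have "0 \<le> lpnorm G p g1 + lpnorm G p g2 + lpnorm G p g3"
    by (intro add_nonneg_nonneg lpnorm_nonneg gd)
  then show ?thesis using lpnorm_infinity_le_sum3[OF gd(2-4) le] True by simp
qed (use lpnorm_finite_le_sum3 assms in blast)

lemma lpnorm_const_le:
  fixes G :: "(real^'n) set"
  assumes G: "open G" "bounded G" and p: "1 \<le> p"
  shows "lpnorm G p (\<lambda>z. c) \<le> max 1 (integral G (\<lambda>z. 1)) * \<bar>c\<bar>"
proof (cases "p = \<infinity>")
  case True
  have "Sup (insert 0 ((\<lambda>z. \<bar>c\<bar>) ` G)) \<le> \<bar>c\<bar>"
    by (rule cSup_least) auto
  also have "\<bar>c\<bar> \<le> max 1 (integral G (\<lambda>z. 1)) * \<bar>c\<bar>"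
    by (simp add: mult_le_cancel_right1)
  finally show ?thesis using True by (simp add: lpnorm_def)
next
  case False
  define q where "q = real_of_ereal p"
  have q: "q \<ge> 1" using p False by (cases p) (auto simp: q_def)
  define \<mu> where "\<mu> = integral G (\<lambda>z. 1::real)"
  have lm: "G \<in> lmeasurable" using G by (simp add: lmeasurable_open)
  have \<mu>0: "0 \<le> \<mu>" unfolding \<mu>_def by (rule integral_nonneg[OF integrable_on_const[OF lm]]) simp
  have "integral G (\<lambda>z. \<bar>c\<bar> powr q) = \<bar>c\<bar> powr q * \<mu>"
    using integral_mult_right[of G "\<bar>c\<bar> powr q" "\<lambda>z. 1"] by (simp add: \<mu>_def)
  then have "lpnorm G p (\<lambda>z. c) = (\<bar>c\<bar> powr q * \<mu>) powr (1 / q)"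
    using False by (simp add: lpnorm_def q_def)
  also have "\<dots> = \<bar>c\<bar> * \<mu> powr (1 / q)"
    using q by (simp add: powr_mult powr_powr)
  also have "\<mu> powr (1 / q) \<le> max 1 \<mu>"
  proof -
    have "\<mu> powr (1 / q) \<le> (max 1 \<mu>) powr (1 / q)" using q \<mu>0 by (intro powr_mono2) auto
    also have "\<dots> \<le> (max 1 \<mu>) powr (1::real)" using q by (intro powr_mono) auto
    finally show ?thesis by simp
  qed
  then have "\<bar>c\<bar> * \<mu> powr (1 / q) \<le> \<bar>c\<bar> * max 1 \<mu>" by (intro mult_left_mono) auto
  finally show ?thesis by (simp add: \<mu>_def mult.commute)
qed

section \<open>Comparison functions\<close>

lemma class_K_mono: "class_K \<gamma> \<Longrightarrow> 0 \<le> r \<Longrightarrow> r \<le> s \<Longrightarrow> \<gamma> r \<le> \<gamma> s"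
  unfolding class_K_def by (cases "r = s") (auto intro!: less_imp_le strict_mono_onD[of "{0..}" \<gamma>])

lemma class_K_nonneg: "class_K \<gamma> \<Longrightarrow> 0 \<le> r \<Longrightarrow> 0 \<le> \<gamma> r"
  using class_K_mono[of \<gamma> 0 r] unfolding class_K_def by simp

lemma class_KL_slice: "class_KL \<beta> \<Longrightarrow> 0 \<le> t \<Longrightarrow> class_K (\<lambda>r. \<beta> r t)"
  unfolding class_KL_def by simp

lemma class_KL_antimono: "class_KL \<beta> \<Longrightarrow> 0 \<le> r \<Longrightarrow> 0 \<le> s \<Longrightarrow> s \<le> t \<Longrightarrow> \<beta> r t \<le> \<beta> r s"
  unfolding class_KL_def monotone_on_def by auto

lemma class_KL_nonneg: "class_KL \<beta> \<Longrightarrow> 0 \<le> r \<Longrightarrow> 0 \<le> t \<Longrightarrow> 0 \<le> \<beta> r t"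
  using class_K_nonneg[OF class_KL_slice] by blast

lemma class_KL_mono: "class_KL \<beta> \<Longrightarrow> 0 \<le> t \<Longrightarrow> 0 \<le> r \<Longrightarrow> r \<le> s \<Longrightarrow> \<beta> r t \<le> \<beta> s t"
  using class_K_mono[OF class_KL_slice] by blast

lemma class_KL_add_le:
  assumes "class_KL \<beta>" "0 \<le> a" "0 \<le> b" "0 \<le> t"
  shows "\<beta> (a + b) t \<le> \<beta> (2 * a) t + \<beta> (2 * b) 0"
proof -
  have n: "0 \<le> \<beta> (2 * a) t" "0 \<le> \<beta> (2 * b) t" using class_KL_nonneg[OF assms(1)] assms by auto
  have b0: "\<beta> (2 * b) t \<le> \<beta> (2 * b) 0" using class_KL_antimono[OF assms(1)] assms by auto
  show ?thesis
  proof (cases "a \<le> b")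
    case True
    then have "\<beta> (a + b) t \<le> \<beta> (2 * b) t" using class_KL_mono[OF assms(1)] assms by auto
    then show ?thesis using n b0 by linarith
  next
    case False
    then have "\<beta> (a + b) t \<le> \<beta> (2 * a) t" using class_KL_mono[OF assms(1)] assms by auto
    then show ?thesis using n b0 by linarith
  qed
qed

lemma class_K_scaled:
  assumes K: "class_K \<gamma>" and A: "A > 0" and B: "B > 0"
  shows "class_K (\<lambda>r. A * \<gamma> (B * r))"
  unfolding class_K_def
proof (intro conjI strict_mono_onI)
  have "(*) B ` {0..} \<subseteq> {0..}" using B by auto
  from continuous_on_compose2[OF _ continuous_on_mult_const this] K
  show "continuous_on {0..} (\<lambda>r. A * \<gamma> (B * r))"
    unfolding class_K_def by (intro continuous_on_mult_left) auto
  show "A * \<gamma> (B * 0) = 0" using K unfolding class_K_def by simp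
  fix r s :: real assume "r \<in> {0..}" "s \<in> {0..}" "r < s"
  then have "\<gamma> (B * r) < \<gamma> (B * s)"
    using K B unfolding class_K_def by (intro strict_mono_onD[of "{0..}" \<gamma>]) auto
  then show "A * \<gamma> (B * r) < A * \<gamma> (B * s)" using A by simp
qed

lemma class_KL_scaled:
  assumes b: "class_KL \<beta>" and A: "A > 0" and B: "B > 0"
  shows "class_KL (\<lambda>r t. A * \<beta> (B * r) t)"
  unfolding class_KL_def
proof (intro conjI allI impI)
  have "(\<lambda>p. (B * fst p, snd p)) ` ({0..} \<times> {0..}) \<subseteq> {0..} \<times> {0..}" using B by auto
  from continuous_on_compose2[OF _ _ this] b
  have "continuous_on ({0..} \<times> {0..}) (\<lambda>p. \<beta> (B * fst p) (snd p))"
    unfolding class_KL_def by (force simp: split_def intro: continuous_intros)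
  then show "continuous_on ({0..} \<times> {0..}) (\<lambda>(r, t). A * \<beta> (B * r) t)"
    by (simp add: split_def continuous_on_mult_left)
  fix t :: real assume "0 \<le> t"
  then show "class_K (\<lambda>r. A * \<beta> (B * r) t)"
    using class_K_scaled[OF class_KL_slice[OF b] A B] by simp
next
  fix r :: real assume "0 \<le> r"
  then have "antimono_on {0..} (\<beta> (B * r))" "(\<beta> (B * r) \<longlongrightarrow> 0) at_top"
    using b B unfolding class_KL_def by simp_all
  then show "antimono_on {0..} (\<lambda>t. A * \<beta> (B * r) t)" "((\<lambda>t. A * \<beta> (B * r) t) \<longlongrightarrow> 0) at_top"
    using A by (auto simp: monotone_on_def intro: tendsto_mult_right_zero)
qed

lemma class_K_combination:
  assumes b: "class_KL \<beta>" and g: "class_K \<gamma>" and pos: "A > 0" "B > 0" "C > 0" "D > 0"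
  shows "class_K (\<lambda>s. A * \<beta> (B * s) 0 + C * \<gamma> s + D * s)"
  unfolding class_K_def
proof (intro conjI strict_mono_onI)
  have b0: "class_K (\<lambda>s. A * \<beta> (B * s) 0)" using class_K_scaled[OF class_KL_slice[OF b] pos(1,2)] by simp
  have "continuous_on {0..} (\<lambda>s. A * \<beta> (B * s) 0)" "continuous_on {0..} \<gamma>"
    using b0 g unfolding class_K_def by auto
  from continuous_on_add[OF continuous_on_add[OF this(1) continuous_on_mult_left[OF this(2)]]
      continuous_on_mult_left[OF continuous_on_id]]
  show "continuous_on {0..} (\<lambda>s. A * \<beta> (B * s) 0 + C * \<gamma> s + D * s)" .
  show "A * \<beta> (B * 0) 0 + C * \<gamma> 0 + D * 0 = 0" using b0 g unfolding class_K_def by simp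
  fix r s :: real assume rs: "r \<in> {0..}" "s \<in> {0..}" "r < s"
  have "A * \<beta> (B * r) 0 \<le> A * \<beta> (B * s) 0" using class_K_mono[OF b0, of r s] rs by auto
  moreover have "\<gamma> r \<le> \<gamma> s" using class_K_mono[OF g, of r s] rs by auto
  ultimately show "A * \<beta> (B * r) 0 + C * \<gamma> r + D * r < A * \<beta> (B * s) 0 + C * \<gamma> s + D * s"
    using pos rs by (intro add_le_less_mono add_mono mult_left_mono) auto
qed

lemma class_K_right_limit:
  assumes g: "class_K \<gamma>" and m: "0 \<le> m"
    and le: "\<And>c. c > m \<Longrightarrow> L \<le> R + \<gamma> c"
  shows "L \<le> R + \<gamma> m"
proof (rule ccontr)
  assume "\<not> L \<le> R + \<gamma> m"
  then have d: "L - R - \<gamma> m > 0" by simp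
  have "continuous_on {0..} \<gamma>" using g unfolding class_K_def by simp
  then have "\<exists>\<delta>>0. \<forall>c\<in>{0..}. dist c m < \<delta> \<longrightarrow> dist (\<gamma> c) (\<gamma> m) < L - R - \<gamma> m"
    using m d unfolding continuous_on_iff by simp
  then obtain \<delta> where \<delta>: "\<delta> > 0" "\<And>c. c \<in> {0..} \<Longrightarrow> dist c m < \<delta> \<Longrightarrow> dist (\<gamma> c) (\<gamma> m) < L - R - \<gamma> m"
    by blast
  have "dist (\<gamma> (m + \<delta>/2)) (\<gamma> m) < L - R - \<gamma> m" using \<delta> m by (intro \<delta>(2)) (auto simp: dist_real_def)
  moreover have "L \<le> R + \<gamma> (m + \<delta>/2)" using le \<delta> by simp
  ultimately show False by (simp add: dist_real_def)
qed

section \<open>Inputs and solutions\<close>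

lemma frontier_subset_closure: "frontier S \<subseteq> closure S"
  by (auto simp: frontier_def)

lemma const_in_Uset: "(\<lambda>s z. k) \<in> Uset G"
  unfolding Uset_def by (auto intro: continuous_on_const)

lemma bdd_above_unorm_set:
  assumes "u \<in> Uset G"
  shows "bdd_above (insert 0 {\<bar>u t z\<bar> | t z. t \<ge> 0 \<and> z \<in> frontier G})"
proof -
  obtain M where "\<And>t z. t \<ge> 0 \<Longrightarrow> z \<in> frontier G \<Longrightarrow> \<bar>u t z\<bar> \<le> M"
    using assms unfolding Uset_def by blast
  then show ?thesis by (intro bdd_aboveI[of _ "max 0 M"]) (auto simp: le_max_iff_disj)
qed

lemma abs_le_unorm:
  assumes "u \<in> Uset G" "t \<ge> 0" "z \<in> frontier G"
  shows "\<bar>u t z\<bar> \<le> unorm G u"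
  unfolding unorm_def using cSup_upper[OF _ bdd_above_unorm_set[OF assms(1)], of "\<bar>u t z\<bar>"] assms by blast

lemma unorm_nonneg:
  assumes "u \<in> Uset G"
  shows "0 \<le> unorm G u"
  unfolding unorm_def using cSup_upper[OF insertI1 bdd_above_unorm_set[OF assms]] .

lemma unorm_const_le: "unorm G (\<lambda>s z. k) \<le> \<bar>k\<bar>"
  unfolding unorm_def by (rule cSup_least) auto

lemma continuous_on_restr:
  assumes "continuous_on (closure G) h"
  shows "continuous_on (closure G) (restr G h)"
  using continuous_on_cong[of "closure G" "closure G" "restr G h" h] assms by (simp add: restr_def)

lemma H1_continuous:
  assumes "H1 G a f X Uad" "x \<in> X"
  shows "continuous_on (closure G) x" "\<And>z. z \<notin> closure G \<Longrightarrow> x z = 0"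
  using assms unfolding H1_def C0cl_def by auto

lemma H1_add: "H1 G a f X Uad \<Longrightarrow> x \<in> X \<Longrightarrow> y \<in> X \<Longrightarrow> (\<lambda>z. x z + y z) \<in> X"
  unfolding H1_def by simp

lemma H1_const: "H1 G a f X Uad \<Longrightarrow> restr G (\<lambda>_. c) \<in> X"
  unfolding H1_def by simp

lemma H1_add_const:
  assumes "H1 G a f X Uad" "x \<in> X"
  shows "restr G (\<lambda>z. x z + c) \<in> X"
proof -
  have "restr G (\<lambda>z. x z + c) = (\<lambda>z. x z + restr G (\<lambda>_. c) z)"
    using H1_continuous(2)[OF assms] by (auto simp: restr_def)
  then show ?thesis using H1_add[OF assms H1_const[OF assms(1)]] by simp
qed

lemma H1_Uad:
  assumes "H1 G a f X Uad" "x0 \<in> X"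
  shows "Uad x0 \<subseteq> {v \<in> Uset G. \<forall>z\<in>frontier G. v 0 z = x0 z}"
    and "\<And>v. v \<in> Uset G \<Longrightarrow> \<forall>t\<ge>0. \<forall>z\<in>frontier G. v t z = x0 z \<Longrightarrow> v \<in> Uad x0"
    and "\<And>u. u \<in> Uad x0 \<Longrightarrow> \<exists>x. is_sol G a f x0 u x \<and> (\<forall>t\<ge>0. x t \<in> X)"
  using assms unfolding H1_def by auto

lemma H1_const_in_Uad:
  assumes "H1 G a f X Uad" "x0 \<in> X" "\<And>z. z \<in> frontier G \<Longrightarrow> x0 z = k"
  shows "(\<lambda>s z. k) \<in> Uad x0"
  using H1_Uad(2)[OF assms(1,2) const_in_Uset] assms(3) by simp

lemma phi_eq_restr_solution:
  assumes su: "sol_unique G a f X Uad" and x0: "x0 \<in> X" "u \<in> Uad x0"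
    and s: "is_sol G a f x0 u x" and t: "t \<ge> 0"
  shows "phi G a f t x0 u = restr G (x t)"
  unfolding phi_def
proof (rule the_equality)
  show "\<exists>x'. is_sol G a f x0 u x' \<and> restr G (x t) = restr G (x' t)" using s by blast
  fix w assume "\<exists>x'. is_sol G a f x0 u x' \<and> w = restr G (x' t)"
  then obtain x' where x': "is_sol G a f x0 u x'" "w = restr G (x' t)" by blast
  have "\<forall>z\<in>closure G. x' t z = x t z"
    using su x0 x' s t unfolding sol_unique_def by blast
  then show "w = restr G (x t)" using x'(2) by (auto simp: restr_def)
qed

lemma obtain_solution:
  assumes h1: "H1 G a f X Uad" and su: "sol_unique G a f X Uad" and x0: "x0 \<in> X" "u \<in> Uad x0"
  obtains x where "is_sol G a f x0 u x" "\<And>t. t \<ge> 0 \<Longrightarrow> phi G a f t x0 u = restr G (x t)"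
proof -
  obtain x where "is_sol G a f x0 u x" using H1_Uad(3)[OF h1 x0] by blast
  then show ?thesis using that phi_eq_restr_solution[OF su x0] by blast
qed

lemma bounded_continuous_on_X:
  "H1 G a f X Uad \<Longrightarrow> bounded G \<Longrightarrow> x \<in> X \<Longrightarrow> bounded_continuous_on G x"
  using H1_continuous bounded_continuous_on_closure by blast

lemma continuous_on_phi:
  assumes h1: "H1 G a f X Uad" and su: "sol_unique G a f X Uad"
    and x0: "x0 \<in> X" "u \<in> Uad x0" and t: "t \<ge> 0"
  shows "continuous_on (closure G) (phi G a f t x0 u)"
proof -
  obtain x where "is_sol G a f x0 u x" "\<And>t. t \<ge> 0 \<Longrightarrow> phi G a f t x0 u = restr G (x t)"
    using obtain_solution[OF h1 su x0] by blast
  then show ?thesis using continuous_on_restr CL_continuous_slice t by (metis is_sol_def)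
qed

lemma Q_initial_state:
  assumes h1: "H1 G a f X Uad" and y: "y \<in> Yset G X"
  shows "restr G (\<lambda>z. y z + k) \<in> X" and "(\<lambda>s z. k) \<in> Uad (restr G (\<lambda>z. y z + k))"
    and "(\<lambda>s z. k) \<in> Uc G"
proof -
  show xX: "restr G (\<lambda>z. y z + k) \<in> X" using H1_add_const[OF h1] y by (simp add: Yset_def)
  have "restr G (\<lambda>z. y z + k) z = k" if "z \<in> frontier G" for z
    using y that frontier_subset_closure by (auto simp: Yset_def restr_def)
  then show "(\<lambda>s z. k) \<in> Uad (restr G (\<lambda>z. y z + k))" by (rule H1_const_in_Uad[OF h1 xX])
  show "(\<lambda>s z. k) \<in> Uc G" using const_in_Uset by (auto simp: Uc_def)
qed

lemma bounded_continuous_on_phiY: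
  fixes G :: "(real^'n) set"
  assumes h1: "H1 G a f X Uad" and su: "sol_unique G a f X Uad" and bG: "bounded G"
    and y: "y \<in> Yset G X" and t: "t \<ge> 0"
  shows "bounded_continuous_on G (phiY G a f t y k)"
  unfolding phiY_def using continuous_on_phi[OF h1 su Q_initial_state(1,2)[OF h1 y] t]
  by (intro bounded_continuous_on_closure bG continuous_on_restr continuous_intros) auto

section \<open>Equivalence of the ISS properties\<close>

lemma abs_lt_near_frontier:
  fixes G :: "(real^'n) set" and x :: "real^'n \<Rightarrow> real"
  assumes bG: "bounded G" and x: "continuous_on (closure G) x"
    and bd: "\<And>s. s \<in> frontier G \<Longrightarrow> \<bar>x s\<bar> \<le> m" and "m < c"
  obtains \<delta> where "\<delta> > 0" "\<And>z. z \<in> G \<Longrightarrow> infdist z (frontier G) < \<delta> \<Longrightarrow> \<bar>x z\<bar> < c"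
proof -
  have "uniformly_continuous_on (closure G) x"
    using compact_uniformly_continuous[OF x] bG by (simp add: compact_closure)
  then obtain \<delta> where \<delta>: "\<delta> > 0"
    "\<And>z z'. z \<in> closure G \<Longrightarrow> z' \<in> closure G \<Longrightarrow> dist z' z < \<delta> \<Longrightarrow> dist (x z') (x z) < c - m"
    using \<open>m < c\<close> unfolding uniformly_continuous_on_def by (meson diff_gt_0_iff_gt)
  have "\<bar>x z\<bar> < c" if z: "z \<in> G" and lt: "infdist z (frontier G) < \<delta>" for z
  proof -
    have "frontier G \<noteq> {}" using z bG frontier_eq_empty[of G] by auto
    have "\<exists>s\<in>frontier G. dist z s < \<delta>"
    proof (rule ccontr)
      assume "\<not> (\<exists>s\<in>frontier G. dist z s < \<delta>)"
      then have "\<delta> \<le> infdist z (frontier G)"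
        unfolding infdist_notempty[OF \<open>frontier G \<noteq> {}\<close>]
        by (intro cINF_greatest \<open>frontier G \<noteq> {}\<close>) (simp add: not_less)
      then show False using lt by simp
    qed
    then obtain s where s: "s \<in> frontier G" "dist z s < \<delta>" by blast
    have "dist (x z) (x s) < c - m"
      using \<delta>(2)[of s z] s z frontier_subset_closure closure_subset by blast
    then show ?thesis using bd[OF s(1)] by (simp add: dist_real_def)
  qed
  with \<delta>(1) show ?thesis using that by blast
qed

text \<open>(H3) lets us replace an initial state near the boundary by the constant \<open>cc\<close>, without
  changing it where it might exceed \<open>c\<close> in modulus.\<close>

lemma H3_cutoff:
  fixes G :: "(real^'n) set"
  assumes h1: "H1 G a f X Uad" and h3: "H3 G X" and bG: "bounded G" and x: "x \<in> X"
    and bd: "\<And>s. s \<in> frontier G \<Longrightarrow> \<bar>x s\<bar> \<le> m" and "m < c"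
  obtains \<kappa> where "restr G (\<lambda>z. (1 - \<kappa> z) * x z + cc * \<kappa> z) \<in> X"
    "\<And>z. z \<in> frontier G \<Longrightarrow> \<kappa> z = 1" "\<And>z. z \<in> closure G \<Longrightarrow> 0 \<le> \<kappa> z \<and> \<kappa> z \<le> 1"
    "\<And>z. z \<in> G \<Longrightarrow> \<kappa> z \<noteq> 0 \<Longrightarrow> \<bar>x z\<bar> < c"
proof -
  obtain \<delta> where \<delta>: "\<delta> > 0" "\<And>z. z \<in> G \<Longrightarrow> infdist z (frontier G) < \<delta> \<Longrightarrow> \<bar>x z\<bar> < c"
    using abs_lt_near_frontier[OF bG H1_continuous(1)[OF h1 x] bd \<open>m < c\<close>] by blast
  obtain \<kappa> where \<kappa>: "\<forall>z\<in>closure G. 0 \<le> \<kappa> z \<and> \<kappa> z \<le> 1" "\<forall>z\<in>frontier G. \<kappa> z = 1"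
     "\<forall>z\<in>G. infdist z (frontier G) \<ge> \<delta> \<longrightarrow> \<kappa> z = 0"
     "restr G (\<lambda>z. (1 - \<kappa> z) * x z + cc * \<kappa> z) \<in> X"
    using h3 \<delta>(1) x unfolding H3_def by blast
  have "\<bar>x z\<bar> < c" if "z \<in> G" "\<kappa> z \<noteq> 0" for z
    using \<kappa>(3) \<delta>(2) that not_le by blast
  with \<kappa> show ?thesis using that by blast
qed

lemma cutoff_state:
  fixes G :: "(real^'n) set"
  assumes h1: "H1 G a f X Uad" and h3: "H3 G X" and bG: "bounded G" and x: "x \<in> X"
    and bd: "\<And>s. s \<in> frontier G \<Longrightarrow> \<bar>x s\<bar> \<le> m" and c: "m < c" and cc: "\<bar>cc\<bar> = c"
  obtains xc where "xc \<in> X" "\<And>z. z \<in> frontier G \<Longrightarrow> xc z = cc" "\<And>z. z \<notin> closure G \<Longrightarrow> xc z = 0"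
    "\<And>z. z \<in> G \<Longrightarrow> 0 \<le> (xc z - x z) * cc" "\<And>z. z \<in> G \<Longrightarrow> \<bar>xc z - cc\<bar> \<le> \<bar>x z - cc\<bar>"
proof -
  obtain \<kappa> where \<kappa>: "restr G (\<lambda>z. (1 - \<kappa> z) * x z + cc * \<kappa> z) \<in> X"
    "\<And>z. z \<in> frontier G \<Longrightarrow> \<kappa> z = 1" "\<And>z. z \<in> closure G \<Longrightarrow> 0 \<le> \<kappa> z \<and> \<kappa> z \<le> 1"
    "\<And>z. z \<in> G \<Longrightarrow> \<kappa> z \<noteq> 0 \<Longrightarrow> \<bar>x z\<bar> < c"
    using H3_cutoff[where cc = cc, OF h1 h3 bG x bd c] by blast
  define xc where "xc = restr G (\<lambda>z. (1 - \<kappa> z) * x z + cc * \<kappa> z)"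
  show ?thesis
  proof (rule that)
    show "xc \<in> X" using \<kappa>(1) by (simp add: xc_def)
    show "xc z = cc" if "z \<in> frontier G" for z
      using that frontier_subset_closure \<kappa>(2)[OF that] by (auto simp: xc_def restr_def)
    show "xc z = 0" if "z \<notin> closure G" for z using that by (simp add: xc_def restr_def)
    fix z assume z: "z \<in> G"
    then have zc: "z \<in> closure G" using closure_subset by blast
    then have xc_eq: "xc z - x z = \<kappa> z * (cc - x z)" by (simp add: xc_def restr_def algebra_simps)
    have "0 \<le> (cc - x z) * cc" if "\<kappa> z \<noteq> 0"
    proof -
      have "\<bar>x z\<bar> < \<bar>cc\<bar>" using \<kappa>(4)[OF z that] cc by simp
      then show ?thesis by (cases "cc \<ge> 0") (simp_all add: mult_nonneg_nonneg mult_nonpos_nonpos)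
    qed
    then show "0 \<le> (xc z - x z) * cc"
      using \<kappa>(3)[OF zc] unfolding xc_eq by (cases "\<kappa> z = 0") (simp_all add: mult.assoc)
    have "xc z - cc = (1 - \<kappa> z) * (x z - cc)" using xc_eq by (simp add: algebra_simps)
    then show "\<bar>xc z - cc\<bar> \<le> \<bar>x z - cc\<bar>"
      using \<kappa>(3)[OF zc] by (simp add: abs_mult mult_left_le_one_le)
  qed
qed

lemma cutoff_comparison:
  fixes G :: "(real^'n) set"
  assumes st: "standing G a f" and h1: "H1 G a f X Uad" and h2: "H2 G f" and h3: "H3 G X"
    and su: "sol_unique G a f X Uad" and x: "x \<in> X" and u: "u \<in> Uad x"
    and c: "unorm G u < c" and cc: "\<bar>cc\<bar> = c"
  obtains y where "y \<in> Yset G X" "\<And>z. z \<in> G \<Longrightarrow> \<bar>y z\<bar> \<le> \<bar>x z\<bar> + c"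
    "\<And>t z. t \<ge> 0 \<Longrightarrow> z \<in> G \<Longrightarrow> cc * (phi G a f t x u z - phiY G a f t y cc z - cc) \<le> 0"
proof -
  have bG: "bounded G" using st by (simp add: standing_def)
  have uU: "u \<in> Uset G" using H1_Uad(1)[OF h1 x] u by blast
  have ubd: "\<bar>u t z\<bar> \<le> unorm G u" if "t \<ge> 0" "z \<in> frontier G" for t z
    by (rule abs_le_unorm[OF uU that])
  have "\<bar>x s\<bar> \<le> unorm G u" if "s \<in> frontier G" for s
    using ubd[OF order.refl that] H1_Uad(1)[OF h1 x] u that by auto
  then obtain xc where xc: "xc \<in> X" "\<And>z. z \<in> frontier G \<Longrightarrow> xc z = cc" "\<And>z. z \<notin> closure G \<Longrightarrow> xc z = 0"
    "\<And>z. z \<in> G \<Longrightarrow> 0 \<le> (xc z - x z) * cc" "\<And>z. z \<in> G \<Longrightarrow> \<bar>xc z - cc\<bar> \<le> \<bar>x z - cc\<bar>"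
    using cutoff_state[OF h1 h3 bG x _ c cc] by blast
  define y where "y = restr G (\<lambda>z. xc z + - cc)"
  have "y \<in> X" unfolding y_def by (rule H1_add_const[OF h1 xc(1)])
  then have "y \<in> Yset G X"
    using xc(2) frontier_subset_closure by (auto simp: Yset_def y_def restr_def)
  moreover have "\<bar>y z\<bar> \<le> \<bar>x z\<bar> + c" if "z \<in> G" for z
    using xc(5)[OF that] that closure_subset cc by (auto simp: y_def restr_def)
  moreover have "cc * (phi G a f t x u z - phiY G a f t y cc z - cc) \<le> 0" if t: "t \<ge> 0" and z: "z \<in> G" for t z
  proof -
    have ucX: "(\<lambda>s z. cc) \<in> Uad xc" using H1_const_in_Uad[OF h1 xc(1,2)] .
    obtain X1 where X1: "is_sol G a f x u X1" "\<And>t. t \<ge> 0 \<Longrightarrow> phi G a f t x u = restr G (X1 t)"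
      using obtain_solution[OF h1 su x u] by blast
    obtain Xc where Xc: "is_sol G a f xc (\<lambda>s z. cc) Xc" "\<And>t. t \<ge> 0 \<Longrightarrow> phi G a f t xc (\<lambda>s z. cc) = restr G (Xc t)"
      using obtain_solution[OF h1 su xc(1) ucX] by blast
    have zc: "z \<in> closure G" using z closure_subset by blast
    have "restr G (\<lambda>z. y z + cc) = xc" using xc(3) by (auto simp: y_def restr_def)
    then have "phi G a f t x u z - phiY G a f t y cc z - cc = X1 t z - Xc t z"
      unfolding phiY_def using X1(2)[OF t] Xc(2)[OF t] zc by (simp add: restr_def)
    moreover have c0: "0 < c" using c unorm_nonneg[OF uU] by linarith
    have ubc: "- c \<le> u s z' \<and> u s z' \<le> c" if "0 \<le> s" "z' \<in> frontier G" for s z'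
      using ubd[OF that] c by linarith
    consider "cc = c" | "cc = - c" using cc by linarith
    then have "cc * (X1 t z - Xc t z) \<le> 0"
    proof cases
      case 1
      have "X1 t z \<le> Xc t z"
        using xc(4) ubc 1 c0 by (intro comparison_principle[OF st h2 X1(1) Xc(1) _ _ t zc])
          (auto simp: zero_le_mult_iff)
      then show ?thesis using 1 c0 by (simp add: mult_le_0_iff)
    next
      case 2
      have "Xc t z \<le> X1 t z"
        using xc(4) ubc 2 c0 by (intro comparison_principle[OF st h2 Xc(1) X1(1) _ _ t zc])
          (auto simp: zero_le_mult_iff mult_le_0_iff)
      then show ?thesis using 2 c0 by (simp add: mult_le_0_iff)
    qed
    ultimately show ?thesis by simp
  qed
  ultimately show ?thesis using that by blast
qed

lemma class_KL_le_split:
  assumes b: "class_KL \<beta>" and r: "0 \<le> r" "r \<le> 9 * x + 9 * y" and "0 \<le> x" "0 \<le> y" "0 \<le> t"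
  shows "\<beta> r t \<le> \<beta> (18 * x) t + \<beta> (18 * y) 0"
proof -
  have "\<beta> r t \<le> \<beta> (9 * x + 9 * y) t" using class_KL_mono[OF b] assms by blast
  also have "\<dots> \<le> \<beta> (2 * (9 * x)) t + \<beta> (2 * (9 * y)) 0" by (rule class_KL_add_le[OF b]) (use assms in auto)
  finally show ?thesis by simp
qed

lemma ISS_gains:
  assumes "class_KL \<beta>" "class_K \<gamma>" "C > 0"
  shows "class_KL (\<lambda>r t. 18 * \<beta> (18 * r) t)"
    and "class_K (\<lambda>s. 18 * \<beta> (18 * C * s) 0 + 18 * \<gamma> s + 18 * C * s)"
  using class_KL_scaled[OF assms(1), of 18 18] class_K_combination[OF assms(1,2), of 18 "18 * C" 18 "18 * C"] assms(3)
  by simp_all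

lemma lpnorm_le_shift:
  fixes G :: "(real^'n) set"
  assumes "open G" "bounded G" "1 \<le> p" "bounded_continuous_on G g" "bounded_continuous_on G h"
    and "\<And>z. z \<in> G \<Longrightarrow> \<bar>g z\<bar> \<le> \<bar>h z\<bar> + \<bar>k\<bar>"
  shows "lpnorm G p g \<le> 9 * lpnorm G p h + 9 * (max 1 (integral G (\<lambda>z. 1)) * \<bar>k\<bar>)"
proof -
  have "lpnorm G p g \<le> 9 * (lpnorm G p h + lpnorm G p (\<lambda>z. k) + lpnorm G p (\<lambda>z. 0))"
    using assms by (intro lpnorm_le_sum3 bounded_continuous_on_const) auto
  then show ?thesis using lpnorm_const_le[OF assms(1-3), of k] lpnorm_const_le[OF assms(1-3), of 0] by simp
qed

lemma ISS_P_imp_ISS_P_const: "ISS_P G a f X Uad p \<Longrightarrow> ISS_P_const G a f X Uad p"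
  unfolding ISS_P_def ISS_P_const_def by blast

text \<open>A constant input \<open>k\<close> and the initial state \<open>y + k\<close> of (P) produce exactly \<open>\<phi>\<^sub>Y + k\<close>.\<close>

lemma ISS_P_const_imp_ISS_Q:
  fixes G :: "(real ^ 'n::finite) set"
  assumes st: "standing G a f" and h1: "H1 G a f X Uad" and su: "sol_unique G a f X Uad"
    and p: "1 \<le> p" and iss: "ISS_P_const G a f X Uad p"
  shows "ISS_Q G a f X p"
proof -
  have oG: "open G" and bG: "bounded G" using st by (auto simp: standing_def)
  define C where "C = max 1 (integral G (\<lambda>z. 1::real))"
  have C: "C > 0" by (simp add: C_def)
  obtain \<beta> \<gamma> where b: "class_KL \<beta>" and g: "class_K \<gamma>" and est:
    "\<And>t x u. t \<ge> 0 \<Longrightarrow> x \<in> X \<Longrightarrow> u \<in> Uad x \<inter> Uc G \<Longrightarrow>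
      lpnorm G p (phi G a f t x u) \<le> \<beta> (lpnorm G p x) t + \<gamma> (unorm G u)"
    using iss unfolding ISS_P_const_def by blast
  show ?thesis unfolding ISS_Q_def
  proof (intro exI conjI allI impI ballI)
    fix t :: real and y k assume t: "0 \<le> t" and y: "y \<in> Yset G X"
    define x where "x = restr G (\<lambda>z. y z + k)"
    have xX: "x \<in> X" and uA: "(\<lambda>s z. k) \<in> Uad x \<inter> Uc G"
      using Q_initial_state[OF h1 y, of k] by (simp_all add: x_def)
    have yb: "bounded_continuous_on G y" using y bounded_continuous_on_X[OF h1 bG] by (simp add: Yset_def)
    have xb: "bounded_continuous_on G x" by (rule bounded_continuous_on_X[OF h1 bG xX])
    have "lpnorm G p (phi G a f t x (\<lambda>s z. k)) \<le> \<beta> (lpnorm G p x) t + \<gamma> \<bar>k\<bar>"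
      using est[OF t xX uA] class_K_mono[OF g unorm_nonneg[OF const_in_Uset] unorm_const_le, of G k] by simp
    moreover have "lpnorm G p (phiY G a f t y k) \<le> 9 * lpnorm G p (phi G a f t x (\<lambda>s z. k)) + 9 * (C * \<bar>k\<bar>)"
      unfolding C_def
      using continuous_on_phi[OF h1 su xX IntD1[OF uA] t] closure_subset
      by (intro lpnorm_le_shift oG bG p bounded_continuous_on_phiY[OF h1 su bG y t] bounded_continuous_on_closure)
        (auto simp: phiY_def restr_def x_def)
    moreover have "\<beta> (lpnorm G p x) t \<le> \<beta> (18 * lpnorm G p y) t + \<beta> (18 * (C * \<bar>k\<bar>)) 0"
    proof (rule class_KL_le_split[OF b lpnorm_nonneg[OF xb]])
      show "lpnorm G p x \<le> 9 * lpnorm G p y + 9 * (C * \<bar>k\<bar>)"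
        unfolding C_def using closure_subset
        by (intro lpnorm_le_shift[OF oG bG p xb yb]) (auto simp: x_def restr_def)
    qed (use lpnorm_nonneg[OF yb] C t in auto)
    moreover have "0 \<le> \<beta> (18 * lpnorm G p y) t" "0 \<le> \<beta> (18 * (C * \<bar>k\<bar>)) 0" "0 \<le> \<gamma> \<bar>k\<bar>" "0 \<le> C * \<bar>k\<bar>"
      using class_KL_nonneg[OF b] class_K_nonneg[OF g] lpnorm_nonneg[OF yb] C t by simp_all
    ultimately show "lpnorm G p (phiY G a f t y k) \<le> 18 * \<beta> (18 * lpnorm G p y) t +
        (18 * \<beta> (18 * C * \<bar>k\<bar>) 0 + 18 * \<gamma> \<bar>k\<bar> + 18 * C * \<bar>k\<bar>)"
      by (simp add: mult.assoc)
  qed (use ISS_gains[OF b g C] in auto)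
qed

lemma ISS_Q_bound_above_input_norm:
  fixes G :: "(real ^ 'n::finite) set"
  assumes st: "standing G a f" and h1: "H1 G a f X Uad" and h2: "H2 G f" and h3: "H3 G X"
    and su: "sol_unique G a f X Uad" and p: "1 \<le> p"
    and b: "class_KL \<beta>" and g: "class_K \<gamma>"
    and est: "\<And>t y k. t \<ge> 0 \<Longrightarrow> y \<in> Yset G X \<Longrightarrow>
      lpnorm G p (phiY G a f t y k) \<le> \<beta> (lpnorm G p y) t + \<gamma> \<bar>k\<bar>"
    and t: "0 \<le> t" and x: "x \<in> X" and u: "u \<in> Uad x" and c: "unorm G u < c"
  defines "C \<equiv> max 1 (integral G (\<lambda>z. 1::real))"
  shows "lpnorm G p (phi G a f t x u)
    \<le> 18 * \<beta> (18 * lpnorm G p x) t + (18 * \<beta> (18 * C * c) 0 + 18 * \<gamma> c + 18 * C * c)"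
proof -
  have oG: "open G" and bG: "bounded G" using st by (auto simp: standing_def)
  have C: "C > 0" by (simp add: C_def)
  have c0: "c > 0" using c unorm_nonneg H1_Uad(1)[OF h1 x] u by fastforce
  have xb: "bounded_continuous_on G x" by (rule bounded_continuous_on_X[OF h1 bG x])
  have Y: "\<beta> (lpnorm G p y) t \<le> \<beta> (18 * lpnorm G p x) t + \<beta> (18 * (C * c)) 0"
    if y: "y \<in> Yset G X" "\<And>z. z \<in> G \<Longrightarrow> \<bar>y z\<bar> \<le> \<bar>x z\<bar> + c" for y
  proof -
    have yb: "bounded_continuous_on G y" using y bounded_continuous_on_X[OF h1 bG] by (simp add: Yset_def)
    have "lpnorm G p y \<le> 9 * lpnorm G p x + 9 * (C * \<bar>c\<bar>)"
      unfolding C_def by (rule lpnorm_le_shift[OF oG bG p yb xb]) (use y c0 in auto)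
    then show ?thesis
      using class_KL_le_split[OF b lpnorm_nonneg[OF yb] _ lpnorm_nonneg[OF xb] _ t] C c0 by simp
  qed
  obtain y1 where y1: "y1 \<in> Yset G X" "\<And>z. z \<in> G \<Longrightarrow> \<bar>y1 z\<bar> \<le> \<bar>x z\<bar> + c"
    "\<And>t z. t \<ge> 0 \<Longrightarrow> z \<in> G \<Longrightarrow> c * (phi G a f t x u z - phiY G a f t y1 c z - c) \<le> 0"
    using cutoff_comparison[OF st h1 h2 h3 su x u c, of c] c0 by auto
  obtain y2 where y2: "y2 \<in> Yset G X" "\<And>z. z \<in> G \<Longrightarrow> \<bar>y2 z\<bar> \<le> \<bar>x z\<bar> + c"
    "\<And>t z. t \<ge> 0 \<Longrightarrow> z \<in> G \<Longrightarrow> - c * (phi G a f t x u z - phiY G a f t y2 (- c) z - - c) \<le> 0"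
    using cutoff_comparison[OF st h1 h2 h3 su x u c, of "- c"] c0 by auto
  have "\<bar>phi G a f t x u z\<bar> \<le> \<bar>phiY G a f t y1 c z\<bar> + \<bar>phiY G a f t y2 (- c) z\<bar> + \<bar>c\<bar>" if "z \<in> G" for z
  proof -
    have "phi G a f t x u z \<le> phiY G a f t y1 c z + c"
      using y1(3)[OF t that] c0 by (simp add: mult_le_0_iff)
    moreover have "phiY G a f t y2 (- c) z - c \<le> phi G a f t x u z"
      using y2(3)[OF t that] c0 by (simp add: zero_le_mult_iff)
    ultimately show ?thesis by linarith
  qed
  then have "lpnorm G p (phi G a f t x u)
      \<le> 9 * (lpnorm G p (phiY G a f t y1 c) + lpnorm G p (phiY G a f t y2 (- c)) + lpnorm G p (\<lambda>z. c))"
    using continuous_on_phi[OF h1 su x u t]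
    by (intro lpnorm_le_sum3 oG bG p bounded_continuous_on_closure bounded_continuous_on_phiY[OF h1 su bG _ t]
        y1(1) y2(1) bounded_continuous_on_const)
  moreover have "lpnorm G p (\<lambda>z. c) \<le> C * c" using lpnorm_const_le[OF oG bG p, of c] c0 by (simp add: C_def)
  moreover have "lpnorm G p (phiY G a f t y1 c) \<le> \<beta> (lpnorm G p y1) t + \<gamma> c"
    using est[OF t y1(1), of c] c0 by simp
  moreover have "lpnorm G p (phiY G a f t y2 (- c)) \<le> \<beta> (lpnorm G p y2) t + \<gamma> c"
    using est[OF t y2(1), of "- c"] c0 by simp
  moreover have "0 \<le> \<beta> (18 * lpnorm G p x) t" "0 \<le> \<beta> (18 * (C * c)) 0" "0 \<le> \<gamma> c" "0 \<le> C * c"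
    using class_KL_nonneg[OF b] class_K_nonneg[OF g] lpnorm_nonneg[OF xb] C c0 t by simp_all
  ultimately show ?thesis using Y[OF y1(1,2)] Y[OF y2(1,2)] by (simp add: mult.assoc)
qed

text \<open>The estimate for \<open>c = \<parallel>u\<parallel>\<close> itself follows by continuity of the gain.\<close>

lemma ISS_Q_imp_ISS_P:
  fixes G :: "(real ^ 'n::finite) set"
  assumes st: "standing G a f" and h1: "H1 G a f X Uad" and h2: "H2 G f" and h3: "H3 G X"
    and su: "sol_unique G a f X Uad" and p: "1 \<le> p" and iss: "ISS_Q G a f X p"
  shows "ISS_P G a f X Uad p"
proof -
  define C where "C = max 1 (integral G (\<lambda>z. 1::real))"
  obtain \<beta> \<gamma> where b: "class_KL \<beta>" and g: "class_K \<gamma>" and est: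
    "\<And>t y k. t \<ge> 0 \<Longrightarrow> y \<in> Yset G X \<Longrightarrow>
      lpnorm G p (phiY G a f t y k) \<le> \<beta> (lpnorm G p y) t + \<gamma> \<bar>k\<bar>"
    using iss unfolding ISS_Q_def by blast
  have gains: "class_KL (\<lambda>r t. 18 * \<beta> (18 * r) t)"
    "class_K (\<lambda>s. 18 * \<beta> (18 * C * s) 0 + 18 * \<gamma> s + 18 * C * s)"
    using ISS_gains[OF b g, of C] by (simp_all add: C_def)
  show ?thesis unfolding ISS_P_def
  proof (intro exI conjI allI impI ballI)
    fix t :: real and x u assume t: "0 \<le> t" and x: "x \<in> X" and u: "u \<in> Uad x"
    have "0 \<le> unorm G u" using unorm_nonneg H1_Uad(1)[OF h1 x] u by blast
    then show "lpnorm G p (phi G a f t x u)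
      \<le> 18 * \<beta> (18 * lpnorm G p x) t + (\<lambda>s. 18 * \<beta> (18 * C * s) 0 + 18 * \<gamma> s + 18 * C * s) (unorm G u)"
    proof (rule class_K_right_limit[OF gains(2)])
      fix c assume "unorm G u < c"
      from ISS_Q_bound_above_input_norm[OF st h1 h2 h3 su p b g est t x u this]
      show "lpnorm G p (phi G a f t x u)
        \<le> 18 * \<beta> (18 * lpnorm G p x) t + (\<lambda>s. 18 * \<beta> (18 * C * s) 0 + 18 * \<gamma> s + 18 * C * s) c"
        by (simp only: C_def)
    qed
  qed (use gains in auto)
qed

theorem mainTheorem5:
  fixes G :: "(real ^ 'n::finite) set"
    and a :: "'n \<Rightarrow> 'n \<Rightarrow> real ^ 'n \<Rightarrow> real"
    and f :: "real ^ 'n \<Rightarrow> real \<Rightarrow> real ^ 'n \<Rightarrow> real"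
    and X :: "(real ^ 'n \<Rightarrow> real) set"
    and Uad :: "(real ^ 'n \<Rightarrow> real) \<Rightarrow> (real \<Rightarrow> real ^ 'n \<Rightarrow> real) set"
    and p :: ereal
  assumes "standing G a f"
    and "H1 G a f X Uad"
    and "H2 G f"
    and "H3 G X"
    and "sol_unique G a f X Uad"
    and "1 \<le> p"
  shows "(ISS_P G a f X Uad p \<longleftrightarrow> ISS_P_const G a f X Uad p) \<and>
         (ISS_P_const G a f X Uad p \<longleftrightarrow> ISS_Q G a f X p)"
  using ISS_P_imp_ISS_P_const ISS_P_const_imp_ISS_Q[OF assms(1,2,5,6)] ISS_Q_imp_ISS_P[OF assms] by blast

end
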